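(* Let $(\Omega,\mathcal F,\mathbb P)$ be a probability space and $\sigma\colon\Omega\to\Omega$ an invertible, measurable, $\mathbb P$-preserving and ergodic transformation. Let $(M,m)$ be a probability space and let $\mathcal B_{ss}\subset\mathcal B_s\subset\mathcal B_w\subset L^1(m)$ be Banach spaces of real-valued measurable functions on $M$ with $\|h\|_{L^1(m)}\le\|h\|_w\le\|h\|_s\le\|h\|_{ss}$. Let $\psi(\varphi)=\int_M\varphi\,dm$ and $V_s:=\{h\in\mathcal B_s:\psi(h)=0\}$. Let $I\subset(-1,1)$ be an open interval containing $0$ and for $\epsilon\in I$, $\omega\in\Omega$ let $\mathcal L_{\omega,\epsilon}$ be linear operators bounded on $\mathcal B_w,\mathcal B_s,\mathcal B_{ss}$ with $\psi\circ\mathcal L_{\omega,\epsilon}=\psi$; $\mathcal L^n_{\omega,\epsilon}:=\mathcal L_{\sigma^{n-1}\omega,\epsilon}\circ\cdots\circ\mathcal L_{\omega,\epsilon}$, $\mathcal L_\omega:=\mathcal L_{\omega,0}$. Assume there exist $C_i\in L^{p_i}(\Omega,\mathcal F,\mathbb P)$, $p_i>0$, $i\in\{0,1,2,3,4\}$, $A,B\in L^{p_5}(\Omega,\mathcal F,\mathbb P)$, $p_5>0$, $\beta>1$, and for each $\epsilon\in I$ a full-measure set $\Omega_\epsilon\subset\Omega$, such that: (1) $\|\mathcal L^n_{\sigma^{-n}\omega,\epsilon}\|_w\le C_0(\omega)$ for $n\in\mathbb N$, $\epsilon\in I$, $\omega\in\Omega_\epsilon$; (2) $\|\mathcal L^n_{\omega,\epsilon}h\|_w\le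 C_1(\omega)n^{-\beta}\|h\|_s$ for $n\in\mathbb N$, $\epsilon\in I$, $\omega\in\Omega_\epsilon$, $h\in V_s$; (3) $\|(\mathcal L_{\omega,\epsilon}-\mathcal L_\omega)h\|_w\le C_2(\omega)|\epsilon|\,\|h\|_s$ for $\epsilon\in I$, $\omega\in\Omega_\epsilon$, $h\in\mathcal B_s$; (4) for $\mathbb P$-a.e. $\omega$ there is a linear operator $\hat{\mathcal L}_\omega\colon\mathcal B_{ss}\to V_s$ with $\big\|\frac1\epsilon(\mathcal L_{\omega,\epsilon}-\mathcal L_\omega)h-\hat{\mathcal L}_\omega h\big\|_s\le C_3(\omega)|\epsilon|\,\|h\|_{ss}$ for $\epsilon\in I\setminus\{0\}$, $\omega\in\Omega_\epsilon$, $h\in\mathcal B_{ss}$, and $\|\hat{\mathcal L}_\omega h\|_s\le C_3(\omega)\|h\|_{ss}$ for $\mathbb P$-a.e. $\omega$ and all $h\in\mathcal B_{ss}$; (5) for each $\epsilon\in I$ there is a measurable family $(h_{\omega,\epsilon})_{\omega\in\Omega}\subset\mathcal B_{ss}$ with $h_{\omega,\epsilon}\ge0$, $\mathcal L_{\omega,\epsilon}h_{\omega,\epsilon}=h_{\sigma\omega,\epsilon}$, $\psi(h_{\omega,\epsilon})=1$ and $\|h_{\omega,\epsilon}\|_{ss}\le C_4(\omega)$ for each $\epsilon\in I$, $\omega\in\Omega_\epsilon$; (6) $\|\mathcal L^j_{\sigma^{-n}\omega}\|_s\le A(\sigma^{-n}\omega)B(\sigma^{j-n}\omega)$ for $\mathbb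 P$-a.e. $\omega$, $n\in\mathbb N$, $0\le j\le n$. Let $\Phi\colon\Omega\times M\to\mathbb R$ be measurable with $\Phi(\omega,\cdot)\in L^\infty(m)$ and $G(\omega):=\|\Phi(\omega,\cdot)\|_{L^\infty(m)}\in L^{p_6}(\Omega,\mathcal F,\mathbb P)$ for some $p_6>0$ with $\frac1{p_6}+\frac1{p_1}+\frac1{p_3}+\frac1{p_4}\le1$ and $\frac1{p_6}+\frac1{p_0}+\frac1{p_2}+\frac2{p_5}+\frac1{p_3}+\frac1{p_4}\le1$. Define $\int_{\Omega\times M}\Phi\,d\mu_\epsilon:=\int_\Omega\int_M\Phi(\omega,\cdot)h_{\omega,\epsilon}\,dm\,d\mathbb P(\omega)$. Then $\epsilon\mapsto\int_{\Omega\times M}\Phi\,d\mu_\epsilon$ is differentiable at $\epsilon=0$. *)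

theory Defs
  imports "HOL-Probability.Probability"
begin

definition invertible_mp :: "'w measure \<Rightarrow> ('w \<Rightarrow> 'w) \<Rightarrow> bool" where
  "invertible_mp P \<sigma> \<longleftrightarrow>
     bij_betw \<sigma> (space P) (space P) \<and> \<sigma> \<in> measurable P P \<and>
     inv_into (space P) \<sigma> \<in> measurable P P \<and>
     (\<forall>A\<in>sets P. measure P (\<sigma> -` A \<inter> space P) = measure P A)"

definition ergodic :: "'w measure \<Rightarrow> ('w \<Rightarrow> 'w) \<Rightarrow> bool" where
  "ergodic P \<sigma> \<longleftrightarrow>
     (\<forall>A\<in>sets P. \<sigma> -` A \<inter> space P = A \<longrightarrow> measure P A = 0 \<or> measure P A = 1)"

definition sinv :: "'w measure \<Rightarrow> ('w \<Rightarrow> 'w) \<Rightarrow> 'w \<Rightarrow> 'w" where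
  "sinv P \<sigma> = inv_into (space P) \<sigma>"

definition Lp_fun :: "'w measure \<Rightarrow> real \<Rightarrow> ('w \<Rightarrow> real) \<Rightarrow> bool" where
  "Lp_fun P p f \<longleftrightarrow> f \<in> borel_measurable P \<and> integrable P (\<lambda>\<omega>. \<bar>f \<omega>\<bar> powr p)"

definition fun_banach :: "'x measure \<Rightarrow> ('x \<Rightarrow> real) set \<Rightarrow> (('x \<Rightarrow> real) \<Rightarrow> real) \<Rightarrow> bool" where
  "fun_banach m B N \<longleftrightarrow>
     B \<subseteq> borel_measurable m \<and> (\<lambda>x. 0) \<in> B \<and>
     (\<forall>f\<in>B. \<forall>g\<in>B. (\<lambda>x. f x + g x) \<in> B) \<and>
     (\<forall>c. \<forall>f\<in>B. (\<lambda>x. c * f x) \<in> B) \<and>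
     (\<forall>f\<in>B. N f \<ge> 0 \<and> (N f = 0 \<longleftrightarrow> f = (\<lambda>x. 0))) \<and>
     (\<forall>f\<in>B. \<forall>g\<in>B. N (\<lambda>x. f x + g x) \<le> N f + N g) \<and>
     (\<forall>c. \<forall>f\<in>B. N (\<lambda>x. c * f x) = \<bar>c\<bar> * N f) \<and>
     (\<forall>u. (\<forall>n. u n \<in> B) \<and>
          (\<forall>e>0. \<exists>K. \<forall>i\<ge>K. \<forall>j\<ge>K. N (\<lambda>x. u i x - u j x) < e) \<longrightarrow>
          (\<exists>f\<in>B. (\<lambda>n. N (\<lambda>x. u n x - f x)) \<longlonglongrightarrow> 0))"

definition L1norm :: "'x measure \<Rightarrow> ('x \<Rightarrow> real) \<Rightarrow> real" where
  "L1norm m h = (\<integral>x. \<bar>h x\<bar> \<partial>m)"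

definition bounded_op_on :: "('x \<Rightarrow> real) set \<Rightarrow> (('x \<Rightarrow> real) \<Rightarrow> real)
     \<Rightarrow> (('x \<Rightarrow> real) \<Rightarrow> ('x \<Rightarrow> real)) \<Rightarrow> bool" where
  "bounded_op_on B N T \<longleftrightarrow>
     (\<forall>f\<in>B. \<forall>g\<in>B. T (\<lambda>x. f x + g x) = (\<lambda>x. T f x + T g x)) \<and>
     (\<forall>c. \<forall>f\<in>B. T (\<lambda>x. c * f x) = (\<lambda>x. c * T f x)) \<and>
     T ` B \<subseteq> B \<and> (\<exists>K. \<forall>h\<in>B. N (T h) \<le> K * N h)"

fun cocycle :: "('w \<Rightarrow> real \<Rightarrow> ('x \<Rightarrow> real) \<Rightarrow> ('x \<Rightarrow> real)) \<Rightarrow> ('w \<Rightarrow> 'w) \<Rightarrow> nat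
     \<Rightarrow> 'w \<Rightarrow> real \<Rightarrow> ('x \<Rightarrow> real) \<Rightarrow> ('x \<Rightarrow> real)" where
  "cocycle L \<sigma> 0 \<omega> \<epsilon> = id"
| "cocycle L \<sigma> (Suc n) \<omega> \<epsilon> = L ((\<sigma> ^^ n) \<omega>) \<epsilon> \<circ> cocycle L \<sigma> n \<omega> \<epsilon>"

definition Linf_norm :: "'x measure \<Rightarrow> ('x \<Rightarrow> real) \<Rightarrow> ereal" where
  "Linf_norm m f = esssup m (\<lambda>x. ereal \<bar>f x\<bar>)"

end

theory Submission
  imports Defs
begin

(*
  Fix \<omega>, write \<tau> for the inverse of \<sigma> and L\<^sup>k for the cocycle from \<tau>\<^sup>k \<omega> to \<omega>.
  The invariance h\<^sub>\<epsilon>(\<sigma> y) = L\<^sub>y\<^sub>,\<^sub>\<epsilon> h\<^sub>\<epsilon>(y), applied along the backward orbit, gives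

    h\<^sub>\<epsilon>(\<omega>) - h\<^sub>0(\<omega>) = L\<^sup>n\<^sub>\<epsilon> (h\<^sub>\<epsilon> - h\<^sub>0)(\<tau>\<^sup>n \<omega>)
       + \<Sum>k<n. L\<^sup>k\<^sub>\<epsilon> (L\<^sub>\<epsilon> - L\<^sub>0)(\<tau>\<^sup>k\<^sup>+\<^sup>1 \<omega>) h\<^sub>0(\<tau>\<^sup>k\<^sup>+\<^sup>1 \<omega>).

  The first term has mean zero, so by the decay hypothesis (2) its pairing with \<Phi>(\<omega>, -) is
  O(n\<^sup>-\<^sup>\<beta>) and disappears in the limit: the difference quotient of the pairing becomes a
  series. By (1), (3) and (4) its k-th term tends, as \<epsilon> \<rightarrow> 0, to the pairing with
  L\<^sup>k\<^sub>0 Lhat h\<^sub>0(\<tau>\<^sup>k\<^sup>+\<^sup>1 \<omega>), and it is dominated by k\<^sup>-\<^sup>\<beta> G C1 C3 C4, the coefficients being evaluated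
  along the backward orbit. Since \<tau> preserves P and x1 x2 x3 x4 \<le> 1 + \<Sum> xi\<^sup>p\<^sup>i when
  \<Sum> 1/pi \<le> 1, the expectations of these dominants are O(k\<^sup>-\<^sup>\<beta>), so their sum is integrable.
  Tannery's theorem gives pointwise convergence of the difference quotients and dominated
  convergence the convergence of their expectations.
*)

section \<open>Integral inequalities and limit theorems\<close>

lemma mult4_le_1_plus_powr:
  fixes x1 x2 x3 x4 p1 p2 p3 p4 :: real
  assumes x: "0 \<le> x1" "0 \<le> x2" "0 \<le> x3" "0 \<le> x4"
    and p: "0 < p1" "0 < p2" "0 < p3" "0 < p4"
    and exponents: "1/p1 + 1/p2 + 1/p3 + 1/p4 \<le> 1"
  shows "x1 * x2 * x3 * x4 \<le> 1 + x1 powr p1 + x2 powr p2 + x3 powr p3 + x4 powr p4"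
proof -
  define S where "S = 1 + x1 powr p1 + x2 powr p2 + x3 powr p3 + x4 powr p4"
  have S: "1 \<le> S" unfolding S_def by simp
  have root_le: "x \<le> S powr (1/p)" if "0 \<le> x" "0 < p" "x powr p \<le> S" for x p :: real
  proof -
    have "x = (x powr p) powr (1/p)" using that by (simp add: powr_powr)
    also have "\<dots> \<le> S powr (1/p)" using that by (intro powr_mono2) auto
    finally show ?thesis .
  qed
  have "x1 * x2 * x3 * x4 \<le> S powr (1/p1) * S powr (1/p2) * S powr (1/p3) * S powr (1/p4)"
    using x p by (intro mult_mono root_le) (auto simp: S_def)
  also have "\<dots> = S powr (1/p1 + 1/p2 + 1/p3 + 1/p4)" using S by (simp add: powr_add)
  also have "\<dots> \<le> S powr 1" using S exponents by (intro powr_mono) auto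
  finally show ?thesis using S unfolding S_def by simp
qed

lemma mult_le_abs_mult:
  fixes x n c :: real
  assumes "0 \<le> n" "n \<le> c"
  shows "x * n \<le> \<bar>x\<bar> * c"
proof -
  have "x * n \<le> \<bar>x\<bar> * n" using assms(1) by (intro mult_right_mono) auto
  also have "\<dots> \<le> \<bar>x\<bar> * c" using assms(2) by (intro mult_left_mono) auto
  finally show ?thesis .
qed

lemma (in prob_space) integral_abs_mult4_le:
  fixes f1 f2 f3 f4 :: "'a \<Rightarrow> real"
  assumes f: "Lp_fun M p1 f1" "Lp_fun M p2 f2" "Lp_fun M p3 f3" "Lp_fun M p4 f4"
    and p: "0 < p1" "0 < p2" "0 < p3" "0 < p4"
    and exponents: "1/p1 + 1/p2 + 1/p3 + 1/p4 \<le> 1"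
  shows "integrable M (\<lambda>x. f1 x * f2 x * f3 x * f4 x)"
    and "(\<integral>x. \<bar>f1 x * f2 x * f3 x * f4 x\<bar> \<partial>M) \<le>
      1 + (\<integral>x. \<bar>f1 x\<bar> powr p1 \<partial>M) + (\<integral>x. \<bar>f2 x\<bar> powr p2 \<partial>M)
        + (\<integral>x. \<bar>f3 x\<bar> powr p3 \<partial>M) + (\<integral>x. \<bar>f4 x\<bar> powr p4 \<partial>M)"
proof -
  have [measurable]: "f1 \<in> borel_measurable M" "f2 \<in> borel_measurable M"
    "f3 \<in> borel_measurable M" "f4 \<in> borel_measurable M"
    using f unfolding Lp_fun_def by auto
  have int: "integrable M (\<lambda>x. \<bar>f1 x\<bar> powr p1)" "integrable M (\<lambda>x. \<bar>f2 x\<bar> powr p2)"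
    "integrable M (\<lambda>x. \<bar>f3 x\<bar> powr p3)" "integrable M (\<lambda>x. \<bar>f4 x\<bar> powr p4)"
    using f unfolding Lp_fun_def by auto
  define Y where "Y x = 1 + \<bar>f1 x\<bar> powr p1 + \<bar>f2 x\<bar> powr p2 + \<bar>f3 x\<bar> powr p3 + \<bar>f4 x\<bar> powr p4"
    for x
  have Y_int: "integrable M Y" unfolding Y_def using int by auto
  have le_Y: "\<bar>f1 x * f2 x * f3 x * f4 x\<bar> \<le> Y x" for x
    unfolding Y_def abs_mult using p exponents by (intro mult4_le_1_plus_powr) auto
  show prod_int: "integrable M (\<lambda>x. f1 x * f2 x * f3 x * f4 x)"
  proof (rule Bochner_Integration.integrable_bound[OF Y_int])
    show "AE x in M. norm (f1 x * f2 x * f3 x * f4 x) \<le> norm (Y x)"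
      using le_Y by (intro AE_I2) (metis abs_ge_self order.trans real_norm_def)
  qed measurable
  have "(\<integral>x. \<bar>f1 x * f2 x * f3 x * f4 x\<bar> \<partial>M) \<le> integral\<^sup>L M Y"
    using prod_int Y_int le_Y by (intro integral_mono) auto
  also have "\<dots> = 1 + (\<integral>x. \<bar>f1 x\<bar> powr p1 \<partial>M) + (\<integral>x. \<bar>f2 x\<bar> powr p2 \<partial>M)
        + (\<integral>x. \<bar>f3 x\<bar> powr p3 \<partial>M) + (\<integral>x. \<bar>f4 x\<bar> powr p4 \<partial>M)"
    unfolding Y_def using int by (simp add: prob_space)
  finally show "(\<integral>x. \<bar>f1 x * f2 x * f3 x * f4 x\<bar> \<partial>M) \<le> \<dots>" .
qed

lemma AE_summable_of_summable_integral:
  fixes f :: "nat \<Rightarrow> 'a \<Rightarrow> real"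
  assumes int: "\<And>i. integrable M (f i)" and nonneg: "\<And>i. AE x in M. 0 \<le> f i x"
    and summable: "summable (\<lambda>i. \<integral>x. f i x \<partial>M)"
  shows "AE x in M. summable (\<lambda>i. f i x)"
proof -
  have [measurable]: "f i \<in> borel_measurable M" for i using int by auto
  have "(\<integral>\<^sup>+x. (\<Sum>i. ennreal (f i x)) \<partial>M) = (\<Sum>i. \<integral>\<^sup>+x. ennreal (f i x) \<partial>M)"
    by (rule nn_integral_suminf) auto
  also have "\<dots> = (\<Sum>i. ennreal (\<integral>x. f i x \<partial>M))"
    using int nonneg by (simp add: nn_integral_eq_integral)
  also have "\<dots> = ennreal (\<Sum>i. \<integral>x. f i x \<partial>M)"
    using summable nonneg by (intro suminf_ennreal2 integral_nonneg_AE) auto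
  finally have "(\<integral>\<^sup>+x. (\<Sum>i. ennreal (f i x)) \<partial>M) \<noteq> \<infinity>" by simp
  then have "AE x in M. (\<Sum>i. ennreal (f i x)) \<noteq> \<infinity>"
    by (intro nn_integral_noteq_infinite) auto
  moreover have "AE x in M. \<forall>i. 0 \<le> f i x" using nonneg by (simp add: AE_all_countable)
  ultimately show ?thesis by eventually_elim (auto intro: summable_suminf_not_top)
qed

(* The sequence Z only serves to produce a measurable version of the pointwise limit d. *)
lemma tendsto_integral_at_within_dominated:
  fixes D :: "real \<Rightarrow> 'a \<Rightarrow> real"
  assumes Z: "\<And>i. Z i \<in> S - {x}" "Z \<longlonglongrightarrow> x"
    and meas: "\<And>t. t \<in> S - {x} \<Longrightarrow> D t \<in> borel_measurable M"
    and F: "integrable M F" and dom: "\<And>t. t \<in> S - {x} \<Longrightarrow> AE \<omega> in M. \<bar>D t \<omega>\<bar> \<le> F \<omega>"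
    and lim: "\<And>X. (\<And>i. X i \<in> S - {x}) \<Longrightarrow> X \<longlonglongrightarrow> x \<Longrightarrow>
      AE \<omega> in M. (\<lambda>i. D (X i) \<omega>) \<longlonglongrightarrow> d \<omega>"
  shows "\<exists>c. ((\<lambda>t. \<integral>\<omega>. D t \<omega> \<partial>M) \<longlongrightarrow> c) (at x within S)"
proof -
  define d0 where "d0 \<omega> = lim (\<lambda>i. D (Z i) \<omega>)" for \<omega>
  have d0_meas: "d0 \<in> borel_measurable M"
    unfolding d0_def using meas Z(1) by (intro borel_measurable_lim_metric) auto
  have "((\<lambda>t. \<integral>\<omega>. D t \<omega> \<partial>M) \<longlongrightarrow> integral\<^sup>L M d0) (at x within S)"
    unfolding tendsto_at_iff_sequentially comp_def
  proof (intro allI impI)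
    fix X assume X: "\<forall>i. X i \<in> S - {x}" "X \<longlonglongrightarrow> x"
    have "AE \<omega> in M. (\<lambda>i. D (X i) \<omega>) \<longlonglongrightarrow> d \<omega>" using X by (intro lim) auto
    then have "AE \<omega> in M. (\<lambda>i. D (X i) \<omega>) \<longlonglongrightarrow> d0 \<omega>"
      using lim[OF Z] by eventually_elim (auto simp: d0_def limI)
    then show "(\<lambda>i. \<integral>\<omega>. D (X i) \<omega> \<partial>M) \<longlonglongrightarrow> integral\<^sup>L M d0"
      using meas dom X(1) by (intro integral_dominated_convergence[OF d0_meas _ F]) auto
  qed
  then show ?thesis by blast
qed

context prob_space
begin

lemma Linf_norm_nonneg: "0 \<le> Linf_norm M f"
proof -
  have "AE x in M. ereal \<bar>f x\<bar> \<le> Linf_norm M f"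
    unfolding Linf_norm_def by (rule esssup_AE)
  then have "AE x in M. 0 \<le> Linf_norm M f"
    by (elim eventually_mono) (auto intro: order.trans[of 0 "ereal \<bar>f _\<bar>"])
  then show ?thesis by simp
qed

lemma AE_abs_le_Linf_norm:
  assumes "Linf_norm M f < \<infinity>"
  shows "AE x in M. \<bar>f x\<bar> \<le> real_of_ereal (Linf_norm M f)"
proof -
  have "Linf_norm M f = ereal (real_of_ereal (Linf_norm M f))"
    using assms Linf_norm_nonneg[of f] by (cases "Linf_norm M f") auto
  then show ?thesis
    using esssup_AE[of "\<lambda>x. ereal \<bar>f x\<bar>" M] unfolding Linf_norm_def
    by (metis (mono_tags, lifting) ereal_less_eq(3) eventually_mono)
qed

lemma abs_integral_mult_le_Linf_L1:
  assumes f: "f \<in> borel_measurable M" "Linf_norm M f < \<infinity>" and g: "integrable M g"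
  shows "integrable M (\<lambda>x. f x * g x)"
    and "\<bar>\<integral>x. f x * g x \<partial>M\<bar> \<le> real_of_ereal (Linf_norm M f) * L1norm M g"
proof -
  let ?K = "real_of_ereal (Linf_norm M f)"
  have bound: "AE x in M. \<bar>f x * g x\<bar> \<le> ?K * \<bar>g x\<bar>"
    using AE_abs_le_Linf_norm[OF f(2)] by eventually_elim (auto simp: abs_mult mult_right_mono)
  show fg: "integrable M (\<lambda>x. f x * g x)"
  proof (rule Bochner_Integration.integrable_bound)
    show "integrable M (\<lambda>x. ?K * \<bar>g x\<bar>)" using g by simp
    show "AE x in M. norm (f x * g x) \<le> norm (?K * \<bar>g x\<bar>)"
      using bound by eventually_elim simp
  qed (use f(1) g in measurable)
  have "\<bar>\<integral>x. f x * g x \<partial>M\<bar> \<le> (\<integral>x. \<bar>f x * g x\<bar> \<partial>M)" by (rule integral_abs_bound)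
  also have "\<dots> \<le> (\<integral>x. ?K * \<bar>g x\<bar> \<partial>M)" using fg g bound by (intro integral_mono_AE) auto
  finally show "\<bar>\<integral>x. f x * g x \<partial>M\<bar> \<le> ?K * L1norm M g" by (simp add: L1norm_def)
qed

end

context
  fixes m :: "'x measure" and B :: "('x \<Rightarrow> real) set" and N :: "('x \<Rightarrow> real) \<Rightarrow> real"
  assumes banach: "fun_banach m B N"
begin

lemma fun_banach_zero: "(\<lambda>x. 0) \<in> B"
  and fun_banach_add: "f \<in> B \<Longrightarrow> g \<in> B \<Longrightarrow> (\<lambda>x. f x + g x) \<in> B"
  and fun_banach_mult: "f \<in> B \<Longrightarrow> (\<lambda>x. c * f x) \<in> B"
  and fun_banach_norm_nonneg: "f \<in> B \<Longrightarrow> 0 \<le> N f"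
  and fun_banach_norm_triangle: "f \<in> B \<Longrightarrow> g \<in> B \<Longrightarrow> N (\<lambda>x. f x + g x) \<le> N f + N g"
  and fun_banach_norm_mult: "f \<in> B \<Longrightarrow> N (\<lambda>x. c * f x) = \<bar>c\<bar> * N f"
  using banach unfolding fun_banach_def by blast+

lemma fun_banach_diff: "f \<in> B \<Longrightarrow> g \<in> B \<Longrightarrow> (\<lambda>x. f x - g x) \<in> B"
  using fun_banach_add[of f "\<lambda>x. (-1) * g x"] fun_banach_mult[of g "-1"] by simp

lemma fun_banach_divide: "f \<in> B \<Longrightarrow> (\<lambda>x. f x / c) \<in> B"
  using fun_banach_mult[of f "1/c"] by simp

lemma fun_banach_norm_zero: "N (\<lambda>x. 0) = 0"
  using fun_banach_norm_mult[OF fun_banach_zero, of 0] by simp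

lemma fun_banach_norm_diff_le: "f \<in> B \<Longrightarrow> g \<in> B \<Longrightarrow> N (\<lambda>x. f x - g x) \<le> N f + N g"
  using fun_banach_norm_triangle[of f "\<lambda>x. (-1) * g x"] fun_banach_mult[of g "-1"]
    fun_banach_norm_mult[of g "-1"]
  by simp

end

definition linear_endo_on :: "('x \<Rightarrow> real) set \<Rightarrow> (('x \<Rightarrow> real) \<Rightarrow> ('x \<Rightarrow> real)) \<Rightarrow> bool" where
  "linear_endo_on B T \<longleftrightarrow>
     (\<forall>f\<in>B. \<forall>g\<in>B. T (\<lambda>x. f x + g x) = (\<lambda>x. T f x + T g x)) \<and>
     (\<forall>c. \<forall>f\<in>B. T (\<lambda>x. c * f x) = (\<lambda>x. c * T f x)) \<and> T ` B \<subseteq> B"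

lemma bounded_op_on_linear_endo_on: "bounded_op_on B N T \<Longrightarrow> linear_endo_on B T"
  unfolding bounded_op_on_def linear_endo_on_def by blast

lemma linear_endo_on_mem: "linear_endo_on B T \<Longrightarrow> f \<in> B \<Longrightarrow> T f \<in> B"
  and linear_endo_on_add:
    "linear_endo_on B T \<Longrightarrow> f \<in> B \<Longrightarrow> g \<in> B \<Longrightarrow> T (\<lambda>x. f x + g x) = (\<lambda>x. T f x + T g x)"
  and linear_endo_on_mult: "linear_endo_on B T \<Longrightarrow> f \<in> B \<Longrightarrow> T (\<lambda>x. c * f x) = (\<lambda>x. c * T f x)"
  unfolding linear_endo_on_def by blast+

lemma linear_endo_on_diff:
  assumes "fun_banach m B N" "linear_endo_on B T" "f \<in> B" "g \<in> B"
  shows "T (\<lambda>x. f x - g x) = (\<lambda>x. T f x - T g x)"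
  using linear_endo_on_add[OF assms(2,3) fun_banach_mult[OF assms(1,4), of "-1"]]
    linear_endo_on_mult[OF assms(2,4), of "-1"]
  by simp

lemma linear_endo_on_divide:
  "linear_endo_on B T \<Longrightarrow> f \<in> B \<Longrightarrow> T (\<lambda>x. f x / c) = (\<lambda>x. T f x / c)"
  using linear_endo_on_mult[of B T f "1/c"] by simp

lemma cocycle_Suc_left: "cocycle L \<sigma> (Suc n) \<omega> \<epsilon> = cocycle L \<sigma> n (\<sigma> \<omega>) \<epsilon> \<circ> L \<omega> \<epsilon>"
proof (induction n arbitrary: \<omega>)
  case (Suc n)
  have "cocycle L \<sigma> (Suc (Suc n)) \<omega> \<epsilon> = L ((\<sigma> ^^ Suc n) \<omega>) \<epsilon> \<circ> cocycle L \<sigma> (Suc n) \<omega> \<epsilon>"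
    by simp
  also have "\<dots> = L ((\<sigma> ^^ n) (\<sigma> \<omega>)) \<epsilon> \<circ> (cocycle L \<sigma> n (\<sigma> \<omega>) \<epsilon> \<circ> L \<omega> \<epsilon>)"
    unfolding Suc.IH by (simp add: funpow_Suc_right del: funpow.simps)
  finally show ?case by (simp add: o_assoc)
qed simp

lemma cocycle_linear_endo_on:
  "(\<And>j. j < n \<Longrightarrow> linear_endo_on B (L ((\<sigma> ^^ j) \<omega>) \<epsilon>)) \<Longrightarrow> linear_endo_on B (cocycle L \<sigma> n \<omega> \<epsilon>)"
  by (induction n) (auto simp: linear_endo_on_def image_subset_iff)

section \<open>Invertible measure-preserving maps\<close>

locale invertible_mp_space = prob_space P for P :: "'w measure" +
  fixes \<sigma> :: "'w \<Rightarrow> 'w"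
  assumes invertible: "invertible_mp P \<sigma>"
begin

abbreviation \<tau> :: "'w \<Rightarrow> 'w" where "\<tau> \<equiv> sinv P \<sigma>"

lemma bij_\<sigma>: "bij_betw \<sigma> (space P) (space P)"
  and \<tau>_measurable: "\<tau> \<in> measurable P P"
  and \<sigma>_preserving: "A \<in> sets P \<Longrightarrow> measure P (\<sigma> -` A \<inter> space P) = measure P A"
  using invertible unfolding invertible_mp_def sinv_def by auto

lemma \<sigma>_in_space: "\<omega> \<in> space P \<Longrightarrow> \<sigma> \<omega> \<in> space P"
  and \<tau>_in_space: "\<omega> \<in> space P \<Longrightarrow> \<tau> \<omega> \<in> space P"
  and \<sigma>_\<tau>: "\<omega> \<in> space P \<Longrightarrow> \<sigma> (\<tau> \<omega>) = \<omega>"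
  and \<tau>_\<sigma>: "\<omega> \<in> space P \<Longrightarrow> \<tau> (\<sigma> \<omega>) = \<omega>"
  using bij_\<sigma> unfolding sinv_def bij_betw_def
  by (auto intro: inv_into_into f_inv_into_f inv_into_f_f)

lemma funpow_\<sigma>_in_space: "\<omega> \<in> space P \<Longrightarrow> (\<sigma> ^^ k) \<omega> \<in> space P"
  by (induction k) (auto simp: \<sigma>_in_space)

lemma funpow_\<tau>_in_space: "\<omega> \<in> space P \<Longrightarrow> (\<tau> ^^ k) \<omega> \<in> space P"
  by (induction k) (auto simp: \<tau>_in_space)

lemma \<sigma>_funpow_\<tau>_Suc: "\<omega> \<in> space P \<Longrightarrow> \<sigma> ((\<tau> ^^ Suc k) \<omega>) = (\<tau> ^^ k) \<omega>"
  using \<sigma>_\<tau> funpow_\<tau>_in_space by simp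

lemma funpow_\<tau>_measurable: "\<tau> ^^ k \<in> measurable P P"
proof (induction k)
  case (Suc k)
  show ?case unfolding funpow.simps by (rule measurable_comp[OF Suc.IH \<tau>_measurable])
qed simp

lemma distr_\<tau>: "distr P P \<tau> = P"
proof (rule measure_eqI)
  fix A assume "A \<in> sets (distr P P \<tau>)"
  then have A: "A \<in> sets P" by simp
  have "\<tau> -` A \<inter> space P = \<sigma> ` A"
    using sets.sets_into_space[OF A] \<sigma>_\<tau> \<tau>_\<sigma> \<sigma>_in_space by force
  moreover have "\<sigma> -` (\<sigma> ` A) \<inter> space P = A"
    using sets.sets_into_space[OF A] bij_\<sigma> unfolding bij_betw_def inj_on_def by auto
  moreover have "\<tau> -` A \<inter> space P \<in> sets P" using \<tau>_measurable A by (rule measurable_sets)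
  ultimately have "measure P (\<tau> -` A \<inter> space P) = measure P A"
    using \<sigma>_preserving[of "\<sigma> ` A"] by simp
  then show "emeasure (distr P P \<tau>) A = emeasure P A"
    using emeasure_distr[OF \<tau>_measurable A] by (simp add: emeasure_eq_measure)
qed simp

lemma distr_funpow_\<tau>: "distr P P (\<tau> ^^ k) = P"
proof (induction k)
  case (Suc k)
  have "distr (distr P P (\<tau> ^^ k)) P \<tau> = distr P P (\<tau> \<circ> \<tau> ^^ k)"
    by (rule distr_distr[OF \<tau>_measurable funpow_\<tau>_measurable])
  then show ?case unfolding funpow.simps(2)[symmetric] Suc.IH distr_\<tau> by (rule sym)
qed (simp add: id_def)

lemma AE_funpow_\<tau>:
  assumes "AE \<omega> in P. Q \<omega>"
  shows "AE \<omega> in P. Q ((\<tau> ^^ k) \<omega>)"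
  by (rule AE_distrD[OF funpow_\<tau>_measurable]) (simp only: distr_funpow_\<tau> assms)

lemma integrable_comp_funpow_\<tau>:
  fixes f :: "'w \<Rightarrow> real"
  assumes "integrable P f"
  shows "integrable P (\<lambda>\<omega>. f ((\<tau> ^^ k) \<omega>))"
  by (rule integrable_distr[OF funpow_\<tau>_measurable]) (simp add: distr_funpow_\<tau> assms)

lemma integral_comp_funpow_\<tau>:
  fixes f :: "'w \<Rightarrow> real"
  shows "f \<in> borel_measurable P \<Longrightarrow> (\<integral>\<omega>. f ((\<tau> ^^ k) \<omega>) \<partial>P) = integral\<^sup>L P f"
  using integral_distr[OF funpow_\<tau>_measurable, of f] by (simp add: distr_funpow_\<tau>)

lemma Lp_fun_comp_funpow_\<tau>:
  assumes "Lp_fun P p C"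
  shows "Lp_fun P p (\<lambda>\<omega>. C ((\<tau> ^^ k) \<omega>))"
    and "(\<integral>\<omega>. \<bar>C ((\<tau> ^^ k) \<omega>)\<bar> powr p \<partial>P) = (\<integral>\<omega>. \<bar>C \<omega>\<bar> powr p \<partial>P)"
proof -
  have [measurable]: "C \<in> borel_measurable P" and int: "integrable P (\<lambda>\<omega>. \<bar>C \<omega>\<bar> powr p)"
    using assms unfolding Lp_fun_def by auto
  note [measurable] = funpow_\<tau>_measurable
  show "Lp_fun P p (\<lambda>\<omega>. C ((\<tau> ^^ k) \<omega>))"
    unfolding Lp_fun_def using integrable_comp_funpow_\<tau>[OF int] by simp
  show "(\<integral>\<omega>. \<bar>C ((\<tau> ^^ k) \<omega>)\<bar> powr p \<partial>P) = (\<integral>\<omega>. \<bar>C \<omega>\<bar> powr p \<partial>P)"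
    by (rule integral_comp_funpow_\<tau>) measurable
qed

lemma cocycle_funpow_\<tau>_Suc:
  "\<omega> \<in> space P \<Longrightarrow>
    cocycle L \<sigma> (Suc k) ((\<tau> ^^ Suc k) \<omega>) \<epsilon> = cocycle L \<sigma> k ((\<tau> ^^ k) \<omega>) \<epsilon> \<circ> L ((\<tau> ^^ Suc k) \<omega>) \<epsilon>"
  using cocycle_Suc_left[of L \<sigma> k "(\<tau> ^^ Suc k) \<omega>" \<epsilon>] \<sigma>_funpow_\<tau>_Suc by simp

end

section \<open>Linear response\<close>

locale linear_response = invertible_mp_space P \<sigma> + m: prob_space m
  for P :: "'w measure" and \<sigma> :: "'w \<Rightarrow> 'w" and m :: "'x measure" +
  fixes Bw Bs Bss :: "('x \<Rightarrow> real) set"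
    and nw ns nss :: "('x \<Rightarrow> real) \<Rightarrow> real"
    and I :: "real set" and a b :: real
    and L :: "'w \<Rightarrow> real \<Rightarrow> ('x \<Rightarrow> real) \<Rightarrow> ('x \<Rightarrow> real)"
    and Om :: "real \<Rightarrow> 'w set"
    and C0 C1 C2 C3 C4 :: "'w \<Rightarrow> real"
    and p1 p3 p4 p6 \<beta> :: real
    and h :: "real \<Rightarrow> 'w \<Rightarrow> 'x \<Rightarrow> real"
    and \<Phi> :: "'w \<Rightarrow> 'x \<Rightarrow> real"
    and Lhat :: "'w \<Rightarrow> ('x \<Rightarrow> real) \<Rightarrow> ('x \<Rightarrow> real)"
  assumes banach: "fun_banach m Bw nw" "fun_banach m Bs ns" "fun_banach m Bss nss"
    and Bss_Bs: "Bss \<subseteq> Bs" and Bs_Bw: "Bs \<subseteq> Bw" and integrable_Bw: "\<forall>f\<in>Bw. integrable m f"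
    and L1norm_le_nw: "\<forall>f\<in>Bw. L1norm m f \<le> nw f" and nw_le_ns: "\<forall>f\<in>Bs. nw f \<le> ns f"
    and ns_le_nss: "\<forall>f\<in>Bss. ns f \<le> nss f"
    and I: "I = {a<..<b}" "-1 \<le> a" "a < 0" "0 < b" "b \<le> 1"
    and L_bounded: "\<forall>\<epsilon>\<in>I. \<forall>\<omega>\<in>space P.
        bounded_op_on Bw nw (L \<omega> \<epsilon>) \<and> bounded_op_on Bs ns (L \<omega> \<epsilon>) \<and>
        bounded_op_on Bss nss (L \<omega> \<epsilon>)"
    and L_integral: "\<forall>\<epsilon>\<in>I. \<forall>\<omega>\<in>space P. \<forall>f\<in>Bw. (\<integral>x. L \<omega> \<epsilon> f x \<partial>m) = (\<integral>x. f x \<partial>m)"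
    and C_Lp: "Lp_fun P p1 C1" "Lp_fun P p3 C3" "Lp_fun P p4 C4" "p1 > 0" "p3 > 0" "p4 > 0"
    and \<beta>: "\<beta> > 1"
    and Om: "\<forall>\<epsilon>\<in>I. Om \<epsilon> \<in> sets P \<and> measure P (Om \<epsilon>) = 1"
    and H1: "\<forall>n\<ge>1. \<forall>\<epsilon>\<in>I. \<forall>\<omega>\<in>Om \<epsilon>. \<forall>f\<in>Bw.
        nw (cocycle L \<sigma> n ((sinv P \<sigma> ^^ n) \<omega>) \<epsilon> f) \<le> C0 \<omega> * nw f"
    and H2: "\<forall>n\<ge>1. \<forall>\<epsilon>\<in>I. \<forall>\<omega>\<in>Om \<epsilon>. \<forall>f\<in>Bs. (\<integral>x. f x \<partial>m) = 0 \<longrightarrow>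
        nw (cocycle L \<sigma> n \<omega> \<epsilon> f) \<le> C1 \<omega> * real n powr (-\<beta>) * ns f"
    and H3: "\<forall>\<epsilon>\<in>I. \<forall>\<omega>\<in>Om \<epsilon>. \<forall>f\<in>Bs.
        nw (\<lambda>x. L \<omega> \<epsilon> f x - L \<omega> 0 f x) \<le> C2 \<omega> * \<bar>\<epsilon>\<bar> * ns f"
    and H4a: "AE \<omega> in P.
           (\<forall>f\<in>Bss. \<forall>g\<in>Bss. Lhat \<omega> (\<lambda>x. f x + g x) = (\<lambda>x. Lhat \<omega> f x + Lhat \<omega> g x)) \<and>
           (\<forall>c. \<forall>f\<in>Bss. Lhat \<omega> (\<lambda>x. c * f x) = (\<lambda>x. c * Lhat \<omega> f x)) \<and>
           (\<forall>f\<in>Bss. Lhat \<omega> f \<in> Bs \<and> (\<integral>x. Lhat \<omega> f x \<partial>m) = 0) \<and>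
           (\<forall>f\<in>Bss. ns (Lhat \<omega> f) \<le> C3 \<omega> * nss f)"
    and H4b: "\<forall>\<epsilon>\<in>I - {0}. \<forall>\<omega>\<in>Om \<epsilon>. \<forall>f\<in>Bss.
           ns (\<lambda>x. (L \<omega> \<epsilon> f x - L \<omega> 0 f x) / \<epsilon> - Lhat \<omega> f x) \<le> C3 \<omega> * \<bar>\<epsilon>\<bar> * nss f"
    and H5: "\<forall>\<epsilon>\<in>I. (\<lambda>(\<omega>, x). h \<epsilon> \<omega> x) \<in> borel_measurable (P \<Otimes>\<^sub>M m)"
      "\<forall>\<epsilon>\<in>I. \<forall>\<omega>\<in>Om \<epsilon>. h \<epsilon> \<omega> \<in> Bss \<and> (\<forall>x\<in>space m. h \<epsilon> \<omega> x \<ge> 0) \<and>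
         L \<omega> \<epsilon> (h \<epsilon> \<omega>) = h \<epsilon> (\<sigma> \<omega>) \<and> (\<integral>x. h \<epsilon> \<omega> x \<partial>m) = 1 \<and>
         nss (h \<epsilon> \<omega>) \<le> C4 \<omega>"
    and \<Phi>: "(\<lambda>(\<omega>, x). \<Phi> \<omega> x) \<in> borel_measurable (P \<Otimes>\<^sub>M m)"
      "\<forall>\<omega>\<in>space P. Linf_norm m (\<Phi> \<omega>) < \<infinity>"
      "Lp_fun P p6 (\<lambda>\<omega>. real_of_ereal (Linf_norm m (\<Phi> \<omega>)))" "p6 > 0"
      "1/p6 + 1/p1 + 1/p3 + 1/p4 \<le> 1"
begin

lemma zero_in_I: "0 \<in> I" and open_I: "open I" and abs_le_1_of_I: "\<epsilon> \<in> I \<Longrightarrow> \<bar>\<epsilon>\<bar> \<le> 1"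
  using I by auto

lemma Om_in_space: "\<epsilon> \<in> I \<Longrightarrow> \<omega> \<in> Om \<epsilon> \<Longrightarrow> \<omega> \<in> space P"
  using Om sets.sets_into_space by blast

lemma AE_Om: "\<epsilon> \<in> I \<Longrightarrow> AE \<omega> in P. \<omega> \<in> Om \<epsilon>"
  using Om AE_in_set_eq_1 by blast

lemma L_linear:
  assumes "\<epsilon> \<in> I" "\<omega> \<in> space P"
  shows "linear_endo_on Bw (L \<omega> \<epsilon>)" "linear_endo_on Bs (L \<omega> \<epsilon>)" "linear_endo_on Bss (L \<omega> \<epsilon>)"
  using L_bounded assms bounded_op_on_linear_endo_on by blast+

abbreviation transfer :: "real \<Rightarrow> nat \<Rightarrow> 'w \<Rightarrow> ('x \<Rightarrow> real) \<Rightarrow> ('x \<Rightarrow> real)" where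
  "transfer \<epsilon> k \<omega> \<equiv> cocycle L \<sigma> k ((\<tau> ^^ k) \<omega>) \<epsilon>"

lemma transfer_linear:
  assumes "\<epsilon> \<in> I" "\<omega> \<in> space P"
  shows "linear_endo_on Bw (transfer \<epsilon> k \<omega>)" "linear_endo_on Bs (transfer \<epsilon> k \<omega>)"
  using L_linear(1,2)[OF assms(1)] funpow_\<sigma>_in_space[OF funpow_\<tau>_in_space[OF assms(2)]]
  by (auto intro: cocycle_linear_endo_on)

lemma transfer_Suc:
  assumes "\<omega> \<in> space P"
  shows "transfer \<epsilon> (Suc k) \<omega> f = transfer \<epsilon> k \<omega> (L ((\<tau> ^^ Suc k) \<omega>) \<epsilon> f)"
  unfolding cocycle_funpow_\<tau>_Suc[OF assms] by simp

definition regular :: "real \<Rightarrow> 'w \<Rightarrow> bool" where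
  "regular \<epsilon> \<omega> \<longleftrightarrow> \<omega> \<in> space P \<and> (\<forall>k. (\<tau> ^^ k) \<omega> \<in> Om \<epsilon>)"

lemma regular_space: "regular \<epsilon> \<omega> \<Longrightarrow> \<omega> \<in> space P"
  and regular_Om: "regular \<epsilon> \<omega> \<Longrightarrow> (\<tau> ^^ k) \<omega> \<in> Om \<epsilon>"
  unfolding regular_def by blast+

lemma AE_regular: "\<epsilon> \<in> I \<Longrightarrow> AE \<omega> in P. regular \<epsilon> \<omega>"
  using AE_funpow_\<tau>[OF AE_Om] unfolding regular_def by (simp add: AE_all_countable AE_space)

lemma transfer_nw_le:
  assumes "\<epsilon> \<in> I" "regular \<epsilon> \<omega>" "f \<in> Bw"
  shows "nw (transfer \<epsilon> k \<omega> f) \<le> max 1 \<bar>C0 \<omega>\<bar> * nw f"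
proof (cases "k = 0")
  case True
  then show ?thesis using fun_banach_norm_nonneg[OF banach(1) assms(3)] by (simp add: mult_le_cancel_right1)
next
  case False
  then have "nw (transfer \<epsilon> k \<omega> f) \<le> C0 \<omega> * nw f"
    using H1 assms regular_Om[OF assms(2), of 0] unfolding sinv_def by auto
  also have "\<dots> \<le> max 1 \<bar>C0 \<omega>\<bar> * nw f"
    using fun_banach_norm_nonneg[OF banach(1) assms(3)] by (intro mult_right_mono) auto
  finally show ?thesis .
qed

(* k = 0 needs its own value: (2) says nothing about n = 0, and 0 powr -\<beta> = 0. *)
definition decay :: "nat \<Rightarrow> real" where
  "decay k = (if k = 0 then 1 else real k powr (-\<beta>))"

lemma summable_decay: "summable decay"
proof -
  have "eventually (\<lambda>k. decay k = real k powr (-\<beta>)) sequentially"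
    using eventually_ge_at_top[of 1] by eventually_elim (simp add: decay_def)
  then have "summable decay \<longleftrightarrow> summable (\<lambda>k. real k powr (-\<beta>))" by (rule summable_cong)
  then show ?thesis using \<beta> by (simp add: summable_real_powr_iff)
qed

lemma transfer_nw_le_decay:
  assumes "\<epsilon> \<in> I" "regular \<epsilon> \<omega>" "f \<in> Bs" "(\<integral>x. f x \<partial>m) = 0"
  shows "nw (transfer \<epsilon> k \<omega> f) \<le> decay k * \<bar>if k = 0 then 1 else C1 ((\<tau> ^^ k) \<omega>)\<bar> * ns f"
proof (cases "k = 0")
  case True
  then show ?thesis using nw_le_ns assms(3) by (simp add: decay_def)
next
  case False
  have "nw (transfer \<epsilon> k \<omega> f) \<le> C1 ((\<tau> ^^ k) \<omega>) * real k powr (-\<beta>) * ns f"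
    using H2 False assms regular_Om[OF assms(2)] by auto
  also have "\<dots> \<le> \<bar>C1 ((\<tau> ^^ k) \<omega>)\<bar> * real k powr (-\<beta>) * ns f"
    using fun_banach_norm_nonneg[OF banach(2) assms(3)] by (intro mult_right_mono) auto
  finally show ?thesis using False by (simp add: decay_def ac_simps)
qed

definition G :: "'w \<Rightarrow> real" where
  "G \<omega> = real_of_ereal (Linf_norm m (\<Phi> \<omega>))"

definition pairing :: "'w \<Rightarrow> ('x \<Rightarrow> real) \<Rightarrow> real" where
  "pairing \<omega> f = (\<integral>x. \<Phi> \<omega> x * f x \<partial>m)"

lemma G_nonneg: "0 \<le> G \<omega>"
  unfolding G_def using m.Linf_norm_nonneg by (simp add: real_of_ereal_pos)

lemma
  assumes "\<omega> \<in> space P" "f \<in> Bw"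
  shows pairing_integrable: "integrable m (\<lambda>x. \<Phi> \<omega> x * f x)"
    and abs_pairing_le_L1norm: "\<bar>pairing \<omega> f\<bar> \<le> G \<omega> * L1norm m f"
  using m.abs_integral_mult_le_Linf_L1[OF measurable_Pair2[OF \<Phi>(1) assms(1)]] \<Phi>(2) assms
    integrable_Bw
  by (auto simp: pairing_def G_def)

lemma abs_pairing_le:
  assumes "\<omega> \<in> space P" "f \<in> Bw"
  shows "\<bar>pairing \<omega> f\<bar> \<le> G \<omega> * nw f"
proof -
  have "\<bar>pairing \<omega> f\<bar> \<le> G \<omega> * L1norm m f" using abs_pairing_le_L1norm[OF assms] .
  also have "\<dots> \<le> G \<omega> * nw f" using L1norm_le_nw assms(2) G_nonneg by (intro mult_left_mono) auto
  finally show ?thesis .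
qed

lemma pairing_add:
  "\<omega> \<in> space P \<Longrightarrow> f \<in> Bw \<Longrightarrow> g \<in> Bw \<Longrightarrow> pairing \<omega> (\<lambda>x. f x + g x) = pairing \<omega> f + pairing \<omega> g"
  and pairing_diff:
  "\<omega> \<in> space P \<Longrightarrow> f \<in> Bw \<Longrightarrow> g \<in> Bw \<Longrightarrow> pairing \<omega> (\<lambda>x. f x - g x) = pairing \<omega> f - pairing \<omega> g"
  using pairing_integrable[of \<omega> f] pairing_integrable[of \<omega> g]
  by (simp_all add: pairing_def distrib_left right_diff_distrib)

lemma pairing_divide: "pairing \<omega> (\<lambda>x. f x / c) = pairing \<omega> f / c"
  unfolding pairing_def by simp

subsection \<open>Telescoping along the backward orbit\<close>

lemma
  assumes "\<epsilon> \<in> I" "y \<in> Om \<epsilon>"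
  shows h_in_Bss: "h \<epsilon> y \<in> Bss" and h_in_Bs: "h \<epsilon> y \<in> Bs" and h_in_Bw: "h \<epsilon> y \<in> Bw"
    and h_nonneg: "\<forall>x\<in>space m. 0 \<le> h \<epsilon> y x"
    and h_invariant: "L y \<epsilon> (h \<epsilon> y) = h \<epsilon> (\<sigma> y)"
    and h_integral: "(\<integral>x. h \<epsilon> y x \<partial>m) = 1"
    and h_nss_le: "nss (h \<epsilon> y) \<le> C4 y"
  using H5(2) assms Bss_Bs Bs_Bw by blast+

lemma abs_pairing_h_le:
  assumes "\<epsilon> \<in> I" "\<omega> \<in> Om \<epsilon>"
  shows "\<bar>pairing \<omega> (h \<epsilon> \<omega>)\<bar> \<le> G \<omega>"
proof -
  have "L1norm m (h \<epsilon> \<omega>) = (\<integral>x. h \<epsilon> \<omega> x \<partial>m)"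
    unfolding L1norm_def using h_nonneg[OF assms] by (intro Bochner_Integration.integral_cong) auto
  then show ?thesis
    using abs_pairing_le_L1norm[OF _ h_in_Bw[OF assms]] Om_in_space assms h_integral[OF assms]
    by auto
qed

definition hdiff :: "real \<Rightarrow> 'w \<Rightarrow> 'x \<Rightarrow> real" where
  "hdiff \<epsilon> y = (\<lambda>x. h \<epsilon> y x - h 0 y x)"

definition pert :: "real \<Rightarrow> 'w \<Rightarrow> 'x \<Rightarrow> real" where
  "pert \<epsilon> y = (\<lambda>x. L y \<epsilon> (h 0 y) x - L y 0 (h 0 y) x)"

context
  fixes \<epsilon> y
  assumes \<epsilon>: "\<epsilon> \<in> I" and y: "y \<in> Om \<epsilon>" "y \<in> Om 0"
begin

lemma hdiff_in_Bss: "hdiff \<epsilon> y \<in> Bss"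
  unfolding hdiff_def using \<epsilon> y zero_in_I by (intro fun_banach_diff[OF banach(3)] h_in_Bss)

lemma hdiff_integral: "(\<integral>x. hdiff \<epsilon> y x \<partial>m) = 0"
  unfolding hdiff_def using \<epsilon> y zero_in_I h_in_Bw h_integral integrable_Bw by simp

lemma hdiff_ns_le: "ns (hdiff \<epsilon> y) \<le> 2 * \<bar>C4 y\<bar>"
proof -
  have "ns (hdiff \<epsilon> y) \<le> ns (h \<epsilon> y) + ns (h 0 y)"
    unfolding hdiff_def using \<epsilon> y zero_in_I by (intro fun_banach_norm_diff_le[OF banach(2)] h_in_Bs)
  also have "\<dots> \<le> nss (h \<epsilon> y) + nss (h 0 y)"
    using ns_le_nss \<epsilon> y zero_in_I h_in_Bss by (intro add_mono) blast+
  also have "\<dots> \<le> 2 * \<bar>C4 y\<bar>" using h_nss_le[OF \<epsilon> y(1)] h_nss_le[OF zero_in_I y(2)] by linarith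
  finally show ?thesis .
qed

lemma pert_in_Bss: "pert \<epsilon> y \<in> Bss"
  unfolding pert_def using h_in_Bss[OF zero_in_I y(2)]
  by (intro fun_banach_diff[OF banach(3)] linear_endo_on_mem[OF L_linear(3)[OF _ Om_in_space[OF zero_in_I y(2)]]]
      \<epsilon> zero_in_I)

lemma hdiff_\<sigma>: "hdiff \<epsilon> (\<sigma> y) = (\<lambda>x. L y \<epsilon> (hdiff \<epsilon> y) x + pert \<epsilon> y x)"
proof -
  have "L y \<epsilon> (hdiff \<epsilon> y) = (\<lambda>x. L y \<epsilon> (h \<epsilon> y) x - L y \<epsilon> (h 0 y) x)"
    unfolding hdiff_def using \<epsilon> y zero_in_I Om_in_space[OF \<epsilon> y(1)]
    by (intro linear_endo_on_diff[OF banach(1) L_linear(1)] h_in_Bw)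
  then show ?thesis
    using h_invariant \<epsilon> y zero_in_I by (auto simp: hdiff_def pert_def fun_eq_iff)
qed

end

lemma pairing_hdiff_telescope:
  assumes "\<epsilon> \<in> I" "regular \<epsilon> \<omega>" "regular 0 \<omega>"
  shows "pairing \<omega> (hdiff \<epsilon> \<omega>) = pairing \<omega> (transfer \<epsilon> n \<omega> (hdiff \<epsilon> ((\<tau> ^^ n) \<omega>)))
    + (\<Sum>k<n. pairing \<omega> (transfer \<epsilon> k \<omega> (pert \<epsilon> ((\<tau> ^^ Suc k) \<omega>))))"
proof (induction n)
  case (Suc n)
  define y where "y = (\<tau> ^^ Suc n) \<omega>"
  have \<omega>: "\<omega> \<in> space P" using regular_space assms(2) .
  have y: "y \<in> Om \<epsilon>" "y \<in> Om 0" unfolding y_def using assms regular_Om by blast+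
  have y_space: "y \<in> space P" using Om_in_space[OF assms(1) y(1)] .
  have Lhdiff: "L y \<epsilon> (hdiff \<epsilon> y) \<in> Bw"
    using hdiff_in_Bss[OF assms(1) y] Bss_Bs Bs_Bw L_linear(1)[OF assms(1) y_space]
    by (blast intro: linear_endo_on_mem)
  have pert: "pert \<epsilon> y \<in> Bw" using pert_in_Bss[OF assms(1) y] Bss_Bs Bs_Bw by blast
  have "\<sigma> y = (\<tau> ^^ n) \<omega>" unfolding y_def by (rule \<sigma>_funpow_\<tau>_Suc[OF \<omega>])
  then have "hdiff \<epsilon> ((\<tau> ^^ n) \<omega>) = (\<lambda>x. L y \<epsilon> (hdiff \<epsilon> y) x + pert \<epsilon> y x)"
    using hdiff_\<sigma>[OF assms(1) y] by simp
  then have "transfer \<epsilon> n \<omega> (hdiff \<epsilon> ((\<tau> ^^ n) \<omega>))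
      = (\<lambda>x. transfer \<epsilon> n \<omega> (L y \<epsilon> (hdiff \<epsilon> y)) x + transfer \<epsilon> n \<omega> (pert \<epsilon> y) x)"
    using linear_endo_on_add[OF transfer_linear(1)[OF assms(1) \<omega>] Lhdiff pert] by simp
  also have "transfer \<epsilon> n \<omega> (L y \<epsilon> (hdiff \<epsilon> y)) = transfer \<epsilon> (Suc n) \<omega> (hdiff \<epsilon> y)"
    by (simp only: y_def transfer_Suc[OF \<omega>])
  finally have "pairing \<omega> (transfer \<epsilon> n \<omega> (hdiff \<epsilon> ((\<tau> ^^ n) \<omega>)))
      = pairing \<omega> (\<lambda>x. transfer \<epsilon> (Suc n) \<omega> (hdiff \<epsilon> y) x + transfer \<epsilon> n \<omega> (pert \<epsilon> y) x)"
    by simp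
  also have "\<dots> = pairing \<omega> (transfer \<epsilon> (Suc n) \<omega> (hdiff \<epsilon> y)) + pairing \<omega> (transfer \<epsilon> n \<omega> (pert \<epsilon> y))"
    using hdiff_in_Bss[OF assms(1) y] pert Bss_Bs Bs_Bw
    by (intro pairing_add[OF \<omega>] linear_endo_on_mem[OF transfer_linear(1)[OF assms(1) \<omega>]]) blast+
  finally have "pairing \<omega> (transfer \<epsilon> n \<omega> (hdiff \<epsilon> ((\<tau> ^^ n) \<omega>)))
      = pairing \<omega> (transfer \<epsilon> (Suc n) \<omega> (hdiff \<epsilon> y)) + pairing \<omega> (transfer \<epsilon> n \<omega> (pert \<epsilon> y))" .
  then show ?case using Suc.IH unfolding y_def by (simp only: sum.lessThan_Suc)
qed simp


subsection \<open>The difference quotient as a series\<close>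

definition rem_bound :: "'w \<Rightarrow> nat \<Rightarrow> real" where
  "rem_bound \<omega> n = 2 * decay n * \<bar>G \<omega> * C1 ((\<tau> ^^ n) \<omega>) * C4 ((\<tau> ^^ n) \<omega>)\<bar>"

lemma abs_remainder_le:
  assumes "\<epsilon> \<in> I" "regular \<epsilon> \<omega>" "regular 0 \<omega>" "1 \<le> n"
  shows "\<bar>pairing \<omega> (transfer \<epsilon> n \<omega> (hdiff \<epsilon> ((\<tau> ^^ n) \<omega>)))\<bar> \<le> rem_bound \<omega> n"
proof -
  define y where "y = (\<tau> ^^ n) \<omega>"
  have y: "y \<in> Om \<epsilon>" "y \<in> Om 0" unfolding y_def using assms regular_Om by blast+
  have \<omega>: "\<omega> \<in> space P" using regular_space assms(2) .
  have hdiff: "hdiff \<epsilon> y \<in> Bs" using hdiff_in_Bss[OF assms(1) y] Bss_Bs by blast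
  then have "transfer \<epsilon> n \<omega> (hdiff \<epsilon> y) \<in> Bw"
    using Bs_Bw linear_endo_on_mem[OF transfer_linear(1)[OF assms(1) \<omega>]] by blast
  then have "\<bar>pairing \<omega> (transfer \<epsilon> n \<omega> (hdiff \<epsilon> y))\<bar> \<le> G \<omega> * nw (transfer \<epsilon> n \<omega> (hdiff \<epsilon> y))"
    by (rule abs_pairing_le[OF \<omega>])
  also have "\<dots> \<le> G \<omega> * (decay n * \<bar>C1 y\<bar> * ns (hdiff \<epsilon> y))"
    using transfer_nw_le_decay[OF assms(1,2) hdiff hdiff_integral[OF assms(1) y], where k = n] assms(4) G_nonneg
    by (intro mult_left_mono) (auto simp: y_def)
  also have "\<dots> \<le> G \<omega> * (decay n * \<bar>C1 y\<bar> * (2 * \<bar>C4 y\<bar>))"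
    using hdiff_ns_le[OF assms(1) y] G_nonneg by (intro mult_left_mono) (auto simp: decay_def)
  also have "\<dots> = rem_bound \<omega> n"
    unfolding rem_bound_def y_def using G_nonneg by (simp add: abs_mult decay_def)
  finally show ?thesis unfolding y_def .
qed

lemma pairing_hdiff_sums:
  assumes "\<epsilon> \<in> I" "regular \<epsilon> \<omega>" "regular 0 \<omega>" "rem_bound \<omega> \<longlonglongrightarrow> 0"
  shows "(\<lambda>k. pairing \<omega> (transfer \<epsilon> k \<omega> (pert \<epsilon> ((\<tau> ^^ Suc k) \<omega>)))) sums pairing \<omega> (hdiff \<epsilon> \<omega>)"
proof -
  have "(\<lambda>n. pairing \<omega> (transfer \<epsilon> n \<omega> (hdiff \<epsilon> ((\<tau> ^^ n) \<omega>)))) \<longlonglongrightarrow> 0"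
    using abs_remainder_le[OF assms(1-3)]
    by (intro Lim_null_comparison[OF _ assms(4)] eventually_mono[OF eventually_ge_at_top[of 1]]) auto
  then have "(\<lambda>n. pairing \<omega> (hdiff \<epsilon> \<omega>) - pairing \<omega> (transfer \<epsilon> n \<omega> (hdiff \<epsilon> ((\<tau> ^^ n) \<omega>))))
      \<longlonglongrightarrow> pairing \<omega> (hdiff \<epsilon> \<omega>)"
    using tendsto_diff[OF tendsto_const[of "pairing \<omega> (hdiff \<epsilon> \<omega>)"]] by fastforce
  moreover have "(\<Sum>k<n. pairing \<omega> (transfer \<epsilon> k \<omega> (pert \<epsilon> ((\<tau> ^^ Suc k) \<omega>))))
      = pairing \<omega> (hdiff \<epsilon> \<omega>) - pairing \<omega> (transfer \<epsilon> n \<omega> (hdiff \<epsilon> ((\<tau> ^^ n) \<omega>)))" for n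
    using pairing_hdiff_telescope[OF assms(1-3), of n] by linarith
  ultimately show ?thesis unfolding sums_def by simp
qed

definition diff_quot :: "real \<Rightarrow> 'w \<Rightarrow> real" where
  "diff_quot \<epsilon> \<omega> = (pairing \<omega> (h \<epsilon> \<omega>) - pairing \<omega> (h 0 \<omega>)) / \<epsilon>"

definition pert_quot :: "real \<Rightarrow> 'w \<Rightarrow> 'x \<Rightarrow> real" where
  "pert_quot \<epsilon> y = (\<lambda>x. pert \<epsilon> y x / \<epsilon>)"

definition series_term :: "real \<Rightarrow> 'w \<Rightarrow> nat \<Rightarrow> real" where
  "series_term \<epsilon> \<omega> k = pairing \<omega> (transfer \<epsilon> k \<omega> (pert_quot \<epsilon> ((\<tau> ^^ Suc k) \<omega>)))"

lemma diff_quot_sums: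
  assumes "\<epsilon> \<in> I" "regular \<epsilon> \<omega>" "regular 0 \<omega>" "rem_bound \<omega> \<longlonglongrightarrow> 0"
  shows "series_term \<epsilon> \<omega> sums diff_quot \<epsilon> \<omega>"
proof -
  have \<omega>: "\<omega> \<in> space P" using regular_space assms(2) .
  have "pairing \<omega> (hdiff \<epsilon> \<omega>) = pairing \<omega> (h \<epsilon> \<omega>) - pairing \<omega> (h 0 \<omega>)"
    unfolding hdiff_def using regular_Om[OF assms(2), of 0] regular_Om[OF assms(3), of 0]
    by (intro pairing_diff[OF \<omega>] h_in_Bw assms(1) zero_in_I) auto
  moreover have "series_term \<epsilon> \<omega> = (\<lambda>k. pairing \<omega> (transfer \<epsilon> k \<omega> (pert \<epsilon> ((\<tau> ^^ Suc k) \<omega>))) / \<epsilon>)"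
  proof
    fix k
    have "pert \<epsilon> ((\<tau> ^^ Suc k) \<omega>) \<in> Bw"
      using pert_in_Bss[OF assms(1)] regular_Om assms Bss_Bs Bs_Bw by blast
    then show "series_term \<epsilon> \<omega> k = pairing \<omega> (transfer \<epsilon> k \<omega> (pert \<epsilon> ((\<tau> ^^ Suc k) \<omega>))) / \<epsilon>"
      unfolding series_term_def pert_quot_def
      by (simp only: linear_endo_on_divide[OF transfer_linear(1)[OF assms(1) \<omega>]] pairing_divide)
  qed
  ultimately show ?thesis
    unfolding diff_quot_def using sums_divide[OF pairing_hdiff_sums[OF assms], of \<epsilon>] by simp
qed

definition Lhat_regular :: "'w \<Rightarrow> bool" where
  "Lhat_regular y \<longleftrightarrow>
     (\<forall>f\<in>Bss. Lhat y f \<in> Bs \<and> (\<integral>x. Lhat y f x \<partial>m) = 0) \<and> (\<forall>f\<in>Bss. ns (Lhat y f) \<le> C3 y * nss f)"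

lemma AE_Lhat_regular: "AE \<omega> in P. \<forall>k. Lhat_regular ((\<tau> ^^ k) \<omega>)"
proof -
  have "AE \<omega> in P. Lhat_regular \<omega>" using H4a unfolding Lhat_regular_def by eventually_elim blast
  then show ?thesis by (simp add: AE_funpow_\<tau> AE_all_countable)
qed

definition Lhat_h :: "'w \<Rightarrow> 'x \<Rightarrow> real" where
  "Lhat_h y = Lhat y (h 0 y)"

lemma
  assumes y: "y \<in> Om 0" "Lhat_regular y"
  shows Lhat_h_in_Bs: "Lhat_h y \<in> Bs"
    and ns_Lhat_h_le: "ns (Lhat_h y) \<le> \<bar>C3 y\<bar> * \<bar>C4 y\<bar>"
proof -
  have h: "h 0 y \<in> Bss" "nss (h 0 y) \<le> C4 y" using h_in_Bss h_nss_le zero_in_I y(1) by auto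
  then show "Lhat_h y \<in> Bs" using y(2) unfolding Lhat_regular_def Lhat_h_def by blast
  have "ns (Lhat_h y) \<le> C3 y * nss (h 0 y)" using y(2) h unfolding Lhat_regular_def Lhat_h_def by blast
  also have "\<dots> \<le> \<bar>C3 y\<bar> * \<bar>C4 y\<bar>"
    using h fun_banach_norm_nonneg[OF banach(3) h(1)] by (intro mult_le_abs_mult) auto
  finally show "ns (Lhat_h y) \<le> \<bar>C3 y\<bar> * \<bar>C4 y\<bar>" .
qed

context
  fixes \<epsilon> y
  assumes \<epsilon>: "\<epsilon> \<in> I" "\<epsilon> \<noteq> 0" and y: "y \<in> Om \<epsilon>" "y \<in> Om 0" "Lhat_regular y"
begin

lemma pert_quot_in_Bs: "pert_quot \<epsilon> y \<in> Bs"
  unfolding pert_quot_def using pert_in_Bss[OF \<epsilon>(1) y(1,2)] Bss_Bs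
  by (intro fun_banach_divide[OF banach(2)]) blast

lemma pert_quot_integral: "(\<integral>x. pert_quot \<epsilon> y x \<partial>m) = 0"
proof -
  have Lh: "L y e (h 0 y) \<in> Bw" if "e \<in> I" for e
    using h_in_Bw[OF zero_in_I y(2)] Om_in_space[OF \<epsilon>(1) y(1)]
    by (intro linear_endo_on_mem[OF L_linear(1)] that)
  have "(\<integral>x. pert \<epsilon> y x \<partial>m) = (\<integral>x. L y \<epsilon> (h 0 y) x \<partial>m) - (\<integral>x. L y 0 (h 0 y) x \<partial>m)"
    unfolding pert_def using Lh \<epsilon>(1) zero_in_I integrable_Bw by (intro Bochner_Integration.integral_diff) auto
  also have "\<dots> = 0"
    using L_integral \<epsilon>(1) zero_in_I Om_in_space[OF \<epsilon>(1) y(1)] h_in_Bw[OF zero_in_I y(2)] by simp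
  finally show ?thesis unfolding pert_quot_def by simp
qed

lemma ns_pert_quot_diff_Lhat_h_le: "ns (\<lambda>x. pert_quot \<epsilon> y x - Lhat_h y x) \<le> \<bar>C3 y\<bar> * \<bar>C4 y\<bar> * \<bar>\<epsilon>\<bar>"
proof -
  have h: "h 0 y \<in> Bss" "nss (h 0 y) \<le> C4 y" using h_in_Bss h_nss_le zero_in_I y(2) by auto
  have "ns (\<lambda>x. pert_quot \<epsilon> y x - Lhat_h y x) \<le> C3 y * \<bar>\<epsilon>\<bar> * nss (h 0 y)"
    using H4b \<epsilon> y(1) h(1) by (auto simp: pert_quot_def pert_def Lhat_h_def)
  also have "\<dots> = \<bar>\<epsilon>\<bar> * (C3 y * nss (h 0 y))" by simp
  also have "\<dots> \<le> \<bar>\<epsilon>\<bar> * (\<bar>C3 y\<bar> * \<bar>C4 y\<bar>)"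
    using h fun_banach_norm_nonneg[OF banach(3) h(1)] by (intro mult_left_mono mult_le_abs_mult) auto
  finally show ?thesis by (simp add: ac_simps)
qed

lemma ns_pert_quot_le: "ns (pert_quot \<epsilon> y) \<le> 2 * \<bar>C3 y * C4 y\<bar>"
proof -
  have "ns (pert_quot \<epsilon> y) \<le> ns (\<lambda>x. pert_quot \<epsilon> y x - Lhat_h y x) + ns (Lhat_h y)"
    using fun_banach_norm_triangle[OF banach(2) fun_banach_diff[OF banach(2) pert_quot_in_Bs Lhat_h_in_Bs[OF y(2,3)]]
        Lhat_h_in_Bs[OF y(2,3)]]
    by simp
  also have "\<dots> \<le> \<bar>C3 y\<bar> * \<bar>C4 y\<bar> * \<bar>\<epsilon>\<bar> + \<bar>C3 y\<bar> * \<bar>C4 y\<bar>"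
    using ns_pert_quot_diff_Lhat_h_le ns_Lhat_h_le[OF y(2,3)] by (rule add_mono)
  also have "\<dots> \<le> 2 * \<bar>C3 y * C4 y\<bar>"
    using abs_le_1_of_I[OF \<epsilon>(1)] mult_left_le[of "\<bar>\<epsilon>\<bar>" "\<bar>C3 y\<bar> * \<bar>C4 y\<bar>"] by (simp add: abs_mult)
  finally show ?thesis .
qed

end

definition term_bound :: "'w \<Rightarrow> nat \<Rightarrow> real" where
  "term_bound \<omega> k = 2 * decay k *
     \<bar>G \<omega> * (if k = 0 then 1 else C1 ((\<tau> ^^ k) \<omega>)) * C3 ((\<tau> ^^ Suc k) \<omega>) * C4 ((\<tau> ^^ Suc k) \<omega>)\<bar>"

lemma abs_series_term_le:
  assumes "\<epsilon> \<in> I" "\<epsilon> \<noteq> 0" "regular \<epsilon> \<omega>" "regular 0 \<omega>" "Lhat_regular ((\<tau> ^^ Suc k) \<omega>)"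
  shows "\<bar>series_term \<epsilon> \<omega> k\<bar> \<le> term_bound \<omega> k"
proof -
  define y where "y = (\<tau> ^^ Suc k) \<omega>"
  have y: "y \<in> Om \<epsilon>" "y \<in> Om 0" "Lhat_regular y" unfolding y_def using assms regular_Om by blast+
  have \<omega>: "\<omega> \<in> space P" using regular_space assms(3) .
  note pq = pert_quot_in_Bs[OF assms(1,2) y]
  have "transfer \<epsilon> k \<omega> (pert_quot \<epsilon> y) \<in> Bw"
    using pq Bs_Bw linear_endo_on_mem[OF transfer_linear(1)[OF assms(1) \<omega>]] by blast
  then have "\<bar>series_term \<epsilon> \<omega> k\<bar> \<le> G \<omega> * nw (transfer \<epsilon> k \<omega> (pert_quot \<epsilon> y))"
    unfolding series_term_def y_def[symmetric] by (rule abs_pairing_le[OF \<omega>])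
  also have "\<dots> \<le> G \<omega> * (decay k * \<bar>if k = 0 then 1 else C1 ((\<tau> ^^ k) \<omega>)\<bar> * ns (pert_quot \<epsilon> y))"
    using transfer_nw_le_decay[OF assms(1,3) pq pert_quot_integral[OF assms(1,2) y]] G_nonneg
    by (intro mult_left_mono)
  also have "\<dots> \<le> G \<omega> * (decay k * \<bar>if k = 0 then 1 else C1 ((\<tau> ^^ k) \<omega>)\<bar> * (2 * \<bar>C3 y * C4 y\<bar>))"
    using ns_pert_quot_le[OF assms(1,2) y] G_nonneg by (intro mult_left_mono) (auto simp: decay_def)
  also have "\<dots> = term_bound \<omega> k"
    unfolding term_bound_def y_def using G_nonneg by (simp add: abs_mult decay_def)
  finally show ?thesis .
qed


lemma nw_transfer_diff_le:
  assumes \<epsilon>: "\<epsilon> \<in> I" "regular \<epsilon> \<omega>" and fg: "f \<in> Bw" "g \<in> Bw"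
    and f_g: "nw (\<lambda>x. f x - g x) \<le> M * \<bar>\<epsilon>\<bar>"
    and g: "nw (\<lambda>x. transfer \<epsilon> n \<omega> g x - transfer 0 n \<omega> g x) \<le> K * \<bar>\<epsilon>\<bar>"
  shows "nw (\<lambda>x. transfer \<epsilon> n \<omega> f x - transfer 0 n \<omega> g x) \<le> (max 1 \<bar>C0 \<omega>\<bar> * M + K) * \<bar>\<epsilon>\<bar>"
proof -
  have \<omega>: "\<omega> \<in> space P" using regular_space \<epsilon>(2) .
  note T = transfer_linear(1)[OF \<epsilon>(1) \<omega>] and T0 = transfer_linear(1)[OF zero_in_I \<omega>]
  have diff: "(\<lambda>x. f x - g x) \<in> Bw" using fun_banach_diff[OF banach(1) fg] .
  have "(\<lambda>x. transfer \<epsilon> n \<omega> f x - transfer 0 n \<omega> g x)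
      = (\<lambda>x. transfer \<epsilon> n \<omega> (\<lambda>x. f x - g x) x + (transfer \<epsilon> n \<omega> g x - transfer 0 n \<omega> g x))"
    using linear_endo_on_diff[OF banach(1) T fg] by simp
  then have "nw (\<lambda>x. transfer \<epsilon> n \<omega> f x - transfer 0 n \<omega> g x)
      \<le> nw (transfer \<epsilon> n \<omega> (\<lambda>x. f x - g x)) + nw (\<lambda>x. transfer \<epsilon> n \<omega> g x - transfer 0 n \<omega> g x)"
    using fg diff
    by (simp only:) (intro fun_banach_norm_triangle[OF banach(1)] fun_banach_diff[OF banach(1)]
        linear_endo_on_mem[OF T] linear_endo_on_mem[OF T0])
  also have "\<dots> \<le> max 1 \<bar>C0 \<omega>\<bar> * (M * \<bar>\<epsilon>\<bar>) + K * \<bar>\<epsilon>\<bar>"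
  proof (rule add_mono[OF _ g])
    have "nw (transfer \<epsilon> n \<omega> (\<lambda>x. f x - g x)) \<le> max 1 \<bar>C0 \<omega>\<bar> * nw (\<lambda>x. f x - g x)"
      by (rule transfer_nw_le[OF \<epsilon> diff])
    also have "\<dots> \<le> max 1 \<bar>C0 \<omega>\<bar> * (M * \<bar>\<epsilon>\<bar>)" using f_g by (intro mult_left_mono) auto
    finally show "nw (transfer \<epsilon> n \<omega> (\<lambda>x. f x - g x)) \<le> max 1 \<bar>C0 \<omega>\<bar> * (M * \<bar>\<epsilon>\<bar>)" .
  qed
  finally show ?thesis by (simp add: algebra_simps)
qed

lemma transfer_lipschitz_at_0:
  assumes "regular 0 \<omega>" "g \<in> Bs"
  shows "\<exists>K. \<forall>\<epsilon>\<in>I. regular \<epsilon> \<omega> \<longrightarrow>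
    nw (\<lambda>x. transfer \<epsilon> n \<omega> g x - transfer 0 n \<omega> g x) \<le> K * \<bar>\<epsilon>\<bar>"
  using assms(2)
proof (induction n arbitrary: g)
  case 0
  show ?case using fun_banach_norm_zero[OF banach(1)] by (intro exI[of _ 0]) simp
next
  case (Suc n)
  have \<omega>: "\<omega> \<in> space P" using regular_space assms(1) .
  define y where "y = (\<tau> ^^ Suc n) \<omega>"
  have y: "y \<in> space P" unfolding y_def using funpow_\<tau>_in_space[OF \<omega>] .
  have Lg: "L y \<epsilon> g \<in> Bs" if "\<epsilon> \<in> I" for \<epsilon>
    using linear_endo_on_mem[OF L_linear(2)[OF that y] Suc.prems] .
  obtain K where K: "\<And>\<epsilon>. \<epsilon> \<in> I \<Longrightarrow> regular \<epsilon> \<omega> \<Longrightarrow>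
      nw (\<lambda>x. transfer \<epsilon> n \<omega> (L y 0 g) x - transfer 0 n \<omega> (L y 0 g) x) \<le> K * \<bar>\<epsilon>\<bar>"
    using Suc.IH[OF Lg[OF zero_in_I]] by blast
  have "nw (\<lambda>x. transfer \<epsilon> (Suc n) \<omega> g x - transfer 0 (Suc n) \<omega> g x)
      \<le> (max 1 \<bar>C0 \<omega>\<bar> * (\<bar>C2 y\<bar> * ns g) + K) * \<bar>\<epsilon>\<bar>" if \<epsilon>: "\<epsilon> \<in> I" "regular \<epsilon> \<omega>" for \<epsilon>
  proof -
    have "y \<in> Om \<epsilon>" unfolding y_def by (rule regular_Om[OF \<epsilon>(2)])
    then have "nw (\<lambda>x. L y \<epsilon> g x - L y 0 g x) \<le> C2 y * (\<bar>\<epsilon>\<bar> * ns g)"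
      using H3 \<epsilon>(1) Suc.prems by (simp add: mult.assoc)
    also have "\<dots> \<le> \<bar>C2 y\<bar> * ns g * \<bar>\<epsilon>\<bar>"
      using mult_le_abs_mult[of "\<bar>\<epsilon>\<bar> * ns g" "\<bar>\<epsilon>\<bar> * ns g" "C2 y"] fun_banach_norm_nonneg[OF banach(2) Suc.prems]
      by (simp add: ac_simps)
    finally have "nw (\<lambda>x. L y \<epsilon> g x - L y 0 g x) \<le> \<bar>C2 y\<bar> * ns g * \<bar>\<epsilon>\<bar>" .
    moreover have "L y \<epsilon> g \<in> Bw" "L y 0 g \<in> Bw" using Lg \<epsilon>(1) zero_in_I Bs_Bw by blast+
    ultimately show ?thesis
      unfolding transfer_Suc[OF \<omega>] unfolding y_def[symmetric]
      using nw_transfer_diff_le[OF \<epsilon> _ _ _ K[OF \<epsilon>]] by blast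
  qed
  then show ?case by blast
qed

definition limit_term :: "'w \<Rightarrow> nat \<Rightarrow> real" where
  "limit_term \<omega> k = pairing \<omega> (transfer 0 k \<omega> (Lhat_h ((\<tau> ^^ Suc k) \<omega>)))"

lemma abs_series_term_diff_limit_term_le:
  assumes \<epsilon>: "\<epsilon> \<in> I" "\<epsilon> \<noteq> 0" "regular \<epsilon> \<omega>"
    and reg: "regular 0 \<omega>" "Lhat_regular ((\<tau> ^^ Suc k) \<omega>)"
    and K: "nw (\<lambda>x. transfer \<epsilon> k \<omega> (Lhat_h ((\<tau> ^^ Suc k) \<omega>)) x
      - transfer 0 k \<omega> (Lhat_h ((\<tau> ^^ Suc k) \<omega>)) x) \<le> K * \<bar>\<epsilon>\<bar>"
  shows "\<bar>series_term \<epsilon> \<omega> k - limit_term \<omega> k\<bar>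
    \<le> G \<omega> * ((max 1 \<bar>C0 \<omega>\<bar> * (\<bar>C3 ((\<tau> ^^ Suc k) \<omega>)\<bar> * \<bar>C4 ((\<tau> ^^ Suc k) \<omega>)\<bar>) + K) * \<bar>\<epsilon>\<bar>)"
proof -
  let ?y = "(\<tau> ^^ Suc k) \<omega>"
  have \<omega>: "\<omega> \<in> space P" using regular_space reg(1) .
  have y: "?y \<in> Om \<epsilon>" "?y \<in> Om 0" using \<epsilon>(3) reg(1) by (blast intro: regular_Om)+
  note pq = pert_quot_in_Bs[OF \<epsilon>(1,2) y reg(2)] and v = Lhat_h_in_Bs[OF y(2) reg(2)]
  have mem: "transfer \<epsilon> k \<omega> (pert_quot \<epsilon> ?y) \<in> Bw" "transfer 0 k \<omega> (Lhat_h ?y) \<in> Bw"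
    using pq v Bs_Bw linear_endo_on_mem[OF transfer_linear(1)[OF \<epsilon>(1) \<omega>]]
      linear_endo_on_mem[OF transfer_linear(1)[OF zero_in_I \<omega>]]
    by blast+
  have "nw (\<lambda>x. pert_quot \<epsilon> ?y x - Lhat_h ?y x) \<le> ns (\<lambda>x. pert_quot \<epsilon> ?y x - Lhat_h ?y x)"
    using nw_le_ns fun_banach_diff[OF banach(2) pq v] by blast
  also have "\<dots> \<le> \<bar>C3 ?y\<bar> * \<bar>C4 ?y\<bar> * \<bar>\<epsilon>\<bar>" by (rule ns_pert_quot_diff_Lhat_h_le[OF \<epsilon>(1,2) y reg(2)])
  finally have T: "nw (\<lambda>x. transfer \<epsilon> k \<omega> (pert_quot \<epsilon> ?y) x - transfer 0 k \<omega> (Lhat_h ?y) x)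
      \<le> (max 1 \<bar>C0 \<omega>\<bar> * (\<bar>C3 ?y\<bar> * \<bar>C4 ?y\<bar>) + K) * \<bar>\<epsilon>\<bar>"
    using nw_transfer_diff_le[OF \<epsilon>(1,3) _ _ _ K] pq v Bs_Bw by blast
  have "\<bar>series_term \<epsilon> \<omega> k - limit_term \<omega> k\<bar>
      \<le> G \<omega> * nw (\<lambda>x. transfer \<epsilon> k \<omega> (pert_quot \<epsilon> ?y) x - transfer 0 k \<omega> (Lhat_h ?y) x)"
    unfolding series_term_def limit_term_def pairing_diff[OF \<omega> mem, symmetric]
    by (rule abs_pairing_le[OF \<omega> fun_banach_diff[OF banach(1) mem]])
  also have "\<dots> \<le> G \<omega> * ((max 1 \<bar>C0 \<omega>\<bar> * (\<bar>C3 ?y\<bar> * \<bar>C4 ?y\<bar>) + K) * \<bar>\<epsilon>\<bar>)"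
    using T G_nonneg by (rule mult_left_mono)
  finally show ?thesis .
qed

lemma series_term_tendsto:
  assumes X: "\<And>i. X i \<in> I - {0}" "\<And>i. regular (X i) \<omega>" "X \<longlonglongrightarrow> 0"
    and reg: "regular 0 \<omega>" "Lhat_regular ((\<tau> ^^ Suc k) \<omega>)"
  shows "(\<lambda>i. series_term (X i) \<omega> k) \<longlonglongrightarrow> limit_term \<omega> k"
proof -
  let ?y = "(\<tau> ^^ Suc k) \<omega>"
  have "?y \<in> Om 0" using reg(1) by (rule regular_Om)
  then obtain K where K: "\<And>\<epsilon>. \<epsilon> \<in> I \<Longrightarrow> regular \<epsilon> \<omega> \<Longrightarrow>
      nw (\<lambda>x. transfer \<epsilon> k \<omega> (Lhat_h ?y) x - transfer 0 k \<omega> (Lhat_h ?y) x) \<le> K * \<bar>\<epsilon>\<bar>"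
    using transfer_lipschitz_at_0[OF reg(1) Lhat_h_in_Bs[OF _ reg(2)]] by blast
  define M where "M = G \<omega> * (max 1 \<bar>C0 \<omega>\<bar> * (\<bar>C3 ?y\<bar> * \<bar>C4 ?y\<bar>) + K)"
  have bound: "\<bar>series_term (X i) \<omega> k - limit_term \<omega> k\<bar> \<le> M * \<bar>X i\<bar>" for i
  proof -
    have Xi: "X i \<in> I" "X i \<noteq> 0" using X(1)[of i] by auto
    from abs_series_term_diff_limit_term_le[OF Xi X(2) reg K[OF Xi(1) X(2)]]
    show ?thesis unfolding M_def by (simp only: mult.assoc)
  qed
  have "(\<lambda>i. series_term (X i) \<omega> k - limit_term \<omega> k) \<longlonglongrightarrow> 0"
  proof (rule Lim_null_comparison)
    show "\<forall>\<^sub>F i in sequentially. norm (series_term (X i) \<omega> k - limit_term \<omega> k) \<le> M * \<bar>X i\<bar>"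
      using bound by (intro always_eventually allI) simp
    show "(\<lambda>i. M * \<bar>X i\<bar>) \<longlonglongrightarrow> 0" using tendsto_mult_right_zero[OF tendsto_rabs_zero[OF X(3)]] .
  qed
  then show ?thesis by (rule LIM_zero_cancel)
qed

definition typical :: "'w \<Rightarrow> bool" where
  "typical \<omega> \<longleftrightarrow> regular 0 \<omega> \<and> (\<forall>k. Lhat_regular ((\<tau> ^^ k) \<omega>)) \<and>
     summable (term_bound \<omega>) \<and> rem_bound \<omega> \<longlonglongrightarrow> 0"

lemma diff_quot_eq_suminf:
  assumes "\<epsilon> \<in> I" "regular \<epsilon> \<omega>" "typical \<omega>"
  shows "diff_quot \<epsilon> \<omega> = (\<Sum>k. series_term \<epsilon> \<omega> k)"
  using sums_unique[OF diff_quot_sums[OF assms(1,2)]] assms(3) unfolding typical_def by blast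

lemma abs_diff_quot_le:
  assumes "\<epsilon> \<in> I - {0}" "regular \<epsilon> \<omega>" "typical \<omega>"
  shows "\<bar>diff_quot \<epsilon> \<omega>\<bar> \<le> (\<Sum>k. term_bound \<omega> k)"
proof -
  have reg: "regular 0 \<omega>" "\<And>k. Lhat_regular ((\<tau> ^^ Suc k) \<omega>)" "summable (term_bound \<omega>)"
    using assms(3) unfolding typical_def by blast+
  have "norm (\<Sum>k. series_term \<epsilon> \<omega> k) \<le> (\<Sum>k. term_bound \<omega> k)"
    using assms(1,2) abs_series_term_le[OF _ _ _ reg(1,2)] reg(3) by (intro norm_suminf_le) auto
  then show ?thesis using diff_quot_eq_suminf assms by simp
qed

lemma diff_quot_tendsto:
  assumes X: "\<And>i. X i \<in> I - {0}" "\<And>i. regular (X i) \<omega>" "X \<longlonglongrightarrow> 0" and "typical \<omega>"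
  shows "(\<lambda>i. diff_quot (X i) \<omega>) \<longlonglongrightarrow> (\<Sum>k. limit_term \<omega> k)"
proof -
  have reg: "regular 0 \<omega>" "\<And>k. Lhat_regular ((\<tau> ^^ Suc k) \<omega>)" "summable (term_bound \<omega>)"
    using assms(4) unfolding typical_def by blast+
  have "(\<lambda>i. \<Sum>k. series_term (X i) \<omega> k) \<longlonglongrightarrow> (\<Sum>k. limit_term \<omega> k)"
  proof (rule tannerys_theorem[where M = "term_bound \<omega>", THEN conjunct2, THEN conjunct2])
    show "(\<lambda>i. series_term (X i) \<omega> k) \<longlonglongrightarrow> limit_term \<omega> k" for k
      using series_term_tendsto[OF X reg(1,2)] .
    show "\<forall>\<^sub>F (k, i) in at_top \<times>\<^sub>F sequentially. norm (series_term (X i) \<omega> k) \<le> term_bound \<omega> k"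
      using X(1,2) abs_series_term_le[OF _ _ _ reg(1,2)] by (intro always_eventually) auto
  qed (use reg(3) in auto)
  then show ?thesis using diff_quot_eq_suminf X(1,2) assms(4) by simp
qed


subsection \<open>Integrable domination\<close>

(* The constant 1 lets the bounds with a missing factor (k = 0 in term_bound, C3 in rem_bound)
   be treated like the others. *)
definition shifts :: "('w \<Rightarrow> real) \<Rightarrow> ('w \<Rightarrow> real) set" where
  "shifts C = insert (\<lambda>_. 1) (range (\<lambda>k \<omega>. C ((\<tau> ^^ k) \<omega>)))"

lemma Lp_fun_shifts:
  assumes C: "Lp_fun P p C" and f: "f \<in> shifts C"
  shows "Lp_fun P p f" and "(\<integral>\<omega>. \<bar>f \<omega>\<bar> powr p \<partial>P) \<le> 1 + (\<integral>\<omega>. \<bar>C \<omega>\<bar> powr p \<partial>P)"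
proof -
  have nonneg: "0 \<le> (\<integral>\<omega>. \<bar>C \<omega>\<bar> powr p \<partial>P)" by simp
  consider "f = (\<lambda>_. 1)" | k where "f = (\<lambda>\<omega>. C ((\<tau> ^^ k) \<omega>))" using f unfolding shifts_def by blast
  then have "Lp_fun P p f \<and> (\<integral>\<omega>. \<bar>f \<omega>\<bar> powr p \<partial>P) \<le> 1 + (\<integral>\<omega>. \<bar>C \<omega>\<bar> powr p \<partial>P)"
  proof cases
    case 1
    then show ?thesis using nonneg by (auto simp: Lp_fun_def prob_space)
  next
    case 2
    then show ?thesis using Lp_fun_comp_funpow_\<tau>[OF C] by auto
  qed
  then show "Lp_fun P p f" "(\<integral>\<omega>. \<bar>f \<omega>\<bar> powr p \<partial>P) \<le> 1 + (\<integral>\<omega>. \<bar>C \<omega>\<bar> powr p \<partial>P)"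
    by auto
qed

definition moment_bound :: real where
  "moment_bound = 4 + (\<integral>\<omega>. \<bar>G \<omega>\<bar> powr p6 \<partial>P) + (\<integral>\<omega>. \<bar>C1 \<omega>\<bar> powr p1 \<partial>P)
     + (\<integral>\<omega>. \<bar>C3 \<omega>\<bar> powr p3 \<partial>P) + (\<integral>\<omega>. \<bar>C4 \<omega>\<bar> powr p4 \<partial>P)"

lemma G_Lp: "Lp_fun P p6 G"
  using \<Phi>(3) unfolding G_def .

lemma
  assumes "f1 \<in> shifts C1" "f3 \<in> shifts C3" "f4 \<in> shifts C4"
  shows integrable_weight: "integrable P (\<lambda>\<omega>. G \<omega> * f1 \<omega> * f3 \<omega> * f4 \<omega>)"
    and integral_abs_weight_le: "(\<integral>\<omega>. \<bar>G \<omega> * f1 \<omega> * f3 \<omega> * f4 \<omega>\<bar> \<partial>P) \<le> moment_bound"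
proof -
  note Lp = G_Lp Lp_fun_shifts(1)[OF C_Lp(1) assms(1)] Lp_fun_shifts(1)[OF C_Lp(2) assms(2)]
    Lp_fun_shifts(1)[OF C_Lp(3) assms(3)]
  note Young = integral_abs_mult4_le[OF Lp \<Phi>(4) C_Lp(4-6) \<Phi>(5)]
  show "integrable P (\<lambda>\<omega>. G \<omega> * f1 \<omega> * f3 \<omega> * f4 \<omega>)" by (rule Young(1))
  show "(\<integral>\<omega>. \<bar>G \<omega> * f1 \<omega> * f3 \<omega> * f4 \<omega>\<bar> \<partial>P) \<le> moment_bound"
    using Young(2) Lp_fun_shifts(2)[OF C_Lp(1) assms(1)] Lp_fun_shifts(2)[OF C_Lp(2) assms(2)]
      Lp_fun_shifts(2)[OF C_Lp(3) assms(3)]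
    unfolding moment_bound_def by linarith
qed

lemma summable_decay_weight:
  assumes "\<And>k. f1 k \<in> shifts C1" "\<And>k. f3 k \<in> shifts C3" "\<And>k. f4 k \<in> shifts C4"
  defines "w k \<omega> \<equiv> 2 * decay k * \<bar>G \<omega> * f1 k \<omega> * f3 k \<omega> * f4 k \<omega>\<bar>"
  shows "AE \<omega> in P. summable (\<lambda>k. w k \<omega>)" and "integrable P (\<lambda>\<omega>. \<Sum>k. w k \<omega>)"
proof -
  have decay_nonneg: "0 \<le> decay k" for k by (simp add: decay_def)
  have int: "integrable P (w k)" for k
    unfolding w_def using integrable_weight[OF assms(1-3)] by simp
  have nonneg: "0 \<le> w k \<omega>" for k \<omega> unfolding w_def using decay_nonneg by simp
  have le: "(\<integral>\<omega>. w k \<omega> \<partial>P) \<le> 2 * decay k * moment_bound" for k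
    unfolding w_def using integral_abs_weight_le[OF assms(1-3)] decay_nonneg
    by (simp add: mult_left_mono)
  have "summable (\<lambda>k. \<integral>\<omega>. w k \<omega> \<partial>P)"
  proof (rule summable_comparison_test')
    show "summable (\<lambda>k. 2 * decay k * moment_bound)"
      using summable_decay by (intro summable_mult summable_mult2)
    show "norm (\<integral>\<omega>. w k \<omega> \<partial>P) \<le> 2 * decay k * moment_bound" for k
      using le[of k] nonneg by (simp add: integral_nonneg_AE)
  qed
  then show summable: "AE \<omega> in P. summable (\<lambda>k. w k \<omega>)"
    using int nonneg by (intro AE_summable_of_summable_integral) auto
  show "integrable P (\<lambda>\<omega>. \<Sum>k. w k \<omega>)"
    using int summable nonneg \<open>summable (\<lambda>k. \<integral>\<omega>. w k \<omega> \<partial>P)\<close>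
    by (intro integrable_suminf) auto
qed

lemma
  shows AE_summable_term_bound: "AE \<omega> in P. summable (term_bound \<omega>)"
    and integrable_suminf_term_bound: "integrable P (\<lambda>\<omega>. \<Sum>k. term_bound \<omega> k)"
proof -
  have shifts: "(\<lambda>\<omega>. if k = 0 then 1 else C1 ((\<tau> ^^ k) \<omega>)) \<in> shifts C1"
    "(\<lambda>\<omega>. C3 ((\<tau> ^^ Suc k) \<omega>)) \<in> shifts C3" "(\<lambda>\<omega>. C4 ((\<tau> ^^ Suc k) \<omega>)) \<in> shifts C4" for k
    unfolding shifts_def by (cases "k = 0") (auto intro: range_eqI[where x = k] range_eqI[where x = "Suc k"])
  note summable_decay_weight[OF shifts]
  then show "AE \<omega> in P. summable (term_bound \<omega>)" "integrable P (\<lambda>\<omega>. \<Sum>k. term_bound \<omega> k)"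
    unfolding term_bound_def by auto
qed

lemma AE_rem_bound_tendsto: "AE \<omega> in P. rem_bound \<omega> \<longlonglongrightarrow> 0"
proof -
  have shifts: "(\<lambda>\<omega>. C1 ((\<tau> ^^ k) \<omega>)) \<in> shifts C1" "(\<lambda>_. 1) \<in> shifts C3"
    "(\<lambda>\<omega>. C4 ((\<tau> ^^ k) \<omega>)) \<in> shifts C4" for k
    unfolding shifts_def by auto
  have "AE \<omega> in P. summable (rem_bound \<omega>)"
    using summable_decay_weight(1)[OF shifts] unfolding rem_bound_def by simp
  then show ?thesis by (auto elim: eventually_mono intro: summable_LIMSEQ_zero)
qed

lemma AE_typical: "AE \<omega> in P. typical \<omega>"
  using AE_regular[OF zero_in_I] AE_Lhat_regular AE_summable_term_bound AE_rem_bound_tendsto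
  unfolding typical_def by eventually_elim blast

lemma pairing_h_measurable: "\<epsilon> \<in> I \<Longrightarrow> (\<lambda>\<omega>. pairing \<omega> (h \<epsilon> \<omega>)) \<in> borel_measurable P"
  unfolding pairing_def using \<Phi>(1) H5(1)
  by (intro m.borel_measurable_lebesgue_integral) (auto simp: split_beta')

lemma pairing_h_integrable:
  assumes "\<epsilon> \<in> I"
  shows "integrable P (\<lambda>\<omega>. pairing \<omega> (h \<epsilon> \<omega>))"
proof (rule Bochner_Integration.integrable_bound)
  show "integrable P G"
    using integrable_weight[of "\<lambda>_. 1" "\<lambda>_. 1" "\<lambda>_. 1"] unfolding shifts_def by simp
  show "AE \<omega> in P. norm (pairing \<omega> (h \<epsilon> \<omega>)) \<le> norm (G \<omega>)"
    using AE_Om[OF assms] by eventually_elim (use abs_pairing_h_le[OF assms] G_nonneg in auto)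
qed (rule pairing_h_measurable[OF assms])

lemma diff_quot_measurable: "\<epsilon> \<in> I \<Longrightarrow> diff_quot \<epsilon> \<in> borel_measurable P"
  unfolding diff_quot_def[abs_def] using pairing_h_measurable zero_in_I by measurable

lemma integral_diff_quot:
  assumes "\<epsilon> \<in> I"
  shows "(\<integral>\<omega>. diff_quot \<epsilon> \<omega> \<partial>P)
    = ((\<integral>\<omega>. pairing \<omega> (h \<epsilon> \<omega>) \<partial>P) - (\<integral>\<omega>. pairing \<omega> (h 0 \<omega>) \<partial>P)) / \<epsilon>"
  unfolding diff_quot_def using pairing_h_integrable[OF assms] pairing_h_integrable[OF zero_in_I]
  by simp

lemma integral_diff_quot_converges: "\<exists>c. ((\<lambda>\<epsilon>. \<integral>\<omega>. diff_quot \<epsilon> \<omega> \<partial>P) \<longlongrightarrow> c) (at 0 within I)"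
proof (rule tendsto_integral_at_within_dominated[where Z = "\<lambda>i. b / real (i + 2)"])
  show "b / real (i + 2) \<in> I - {0}" for i
  proof -
    have "0 < b / real (i + 2)" using I(4) by simp
    moreover have "b / real (i + 2) < b" using I(4) by (simp add: field_simps add_pos_nonneg)
    ultimately show ?thesis using I(1,3) by auto
  qed
  show "(\<lambda>i. b / real (i + 2)) \<longlonglongrightarrow> 0"
    using LIMSEQ_ignore_initial_segment[OF lim_const_over_n[of b], of 2] by simp
  show "diff_quot \<epsilon> \<in> borel_measurable P" if "\<epsilon> \<in> I - {0}" for \<epsilon>
    using diff_quot_measurable that by blast
  show "AE \<omega> in P. \<bar>diff_quot \<epsilon> \<omega>\<bar> \<le> (\<Sum>k. term_bound \<omega> k)" if "\<epsilon> \<in> I - {0}" for \<epsilon>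
  proof -
    have "AE \<omega> in P. regular \<epsilon> \<omega>" using that by (intro AE_regular) auto
    then show ?thesis using AE_typical by eventually_elim (rule abs_diff_quot_le[OF that])
  qed
  show "AE \<omega> in P. (\<lambda>i. diff_quot (X i) \<omega>) \<longlonglongrightarrow> (\<Sum>k. limit_term \<omega> k)"
    if X: "\<And>i. X i \<in> I - {0}" "X \<longlonglongrightarrow> 0" for X
  proof -
    have "AE \<omega> in P. \<forall>i. regular (X i) \<omega>" using AE_regular X(1) by (simp add: AE_all_countable)
    then show ?thesis using AE_typical by eventually_elim (rule diff_quot_tendsto[OF X(1) _ X(2)]; blast)
  qed
qed (rule integrable_suminf_term_bound)

lemma differentiable_at_0: "(\<lambda>\<epsilon>. \<integral>\<omega>. (\<integral>x. \<Phi> \<omega> x * h \<epsilon> \<omega> x \<partial>m) \<partial>P) differentiable (at 0)"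
proof -
  define F where "F \<epsilon> = (\<integral>\<omega>. pairing \<omega> (h \<epsilon> \<omega>) \<partial>P)" for \<epsilon>
  obtain c where "((\<lambda>\<epsilon>. \<integral>\<omega>. diff_quot \<epsilon> \<omega> \<partial>P) \<longlongrightarrow> c) (at 0 within I)"
    using integral_diff_quot_converges by blast
  then have "((\<lambda>\<epsilon>. (F \<epsilon> - F 0) / (\<epsilon> - 0)) \<longlongrightarrow> c) (at 0 within I)"
    by (rule Lim_transform_within[OF _ zero_less_one]) (simp add: integral_diff_quot F_def)
  then have "(F has_field_derivative c) (at 0)"
    unfolding has_field_derivative_iff at_within_open[OF zero_in_I open_I] .
  then show ?thesis unfolding F_def pairing_def real_differentiable_def by blast
qed

end

theorem theorem8:
  fixes P :: "'w measure" and \<sigma> :: "'w \<Rightarrow> 'w"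
    and m :: "'x measure"
    and Bw Bs Bss :: "('x \<Rightarrow> real) set"
    and nw ns nss :: "('x \<Rightarrow> real) \<Rightarrow> real"
    and I :: "real set" and a b :: real
    and L :: "'w \<Rightarrow> real \<Rightarrow> ('x \<Rightarrow> real) \<Rightarrow> ('x \<Rightarrow> real)"
    and Om :: "real \<Rightarrow> 'w set"
    and C0 C1 C2 C3 C4 A B :: "'w \<Rightarrow> real"
    and p0 p1 p2 p3 p4 p5 p6 \<beta> :: real
    and h :: "real \<Rightarrow> 'w \<Rightarrow> 'x \<Rightarrow> real"
    and \<Phi> :: "'w \<Rightarrow> 'x \<Rightarrow> real"
  assumes P: "prob_space P"
    and \<sigma>: "invertible_mp P \<sigma>" "ergodic P \<sigma>"
    and m: "prob_space m"
    and spaces: "fun_banach m Bw nw" "fun_banach m Bs ns" "fun_banach m Bss nss"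
      "Bss \<subseteq> Bs" "Bs \<subseteq> Bw" "\<forall>f\<in>Bw. integrable m f"
      "\<forall>f\<in>Bw. L1norm m f \<le> nw f" "\<forall>f\<in>Bs. nw f \<le> ns f" "\<forall>f\<in>Bss. ns f \<le> nss f"
    and I: "I = {a<..<b}" "-1 \<le> a" "a < 0" "0 < b" "b \<le> 1"
    and L_bounded: "\<forall>\<epsilon>\<in>I. \<forall>\<omega>\<in>space P.
        bounded_op_on Bw nw (L \<omega> \<epsilon>) \<and> bounded_op_on Bs ns (L \<omega> \<epsilon>) \<and>
        bounded_op_on Bss nss (L \<omega> \<epsilon>)"
    and L_psi: "\<forall>\<epsilon>\<in>I. \<forall>\<omega>\<in>space P. \<forall>f\<in>Bw. (\<integral>x. L \<omega> \<epsilon> f x \<partial>m) = (\<integral>x. f x \<partial>m)"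
    and Lp: "Lp_fun P p0 C0" "Lp_fun P p1 C1" "Lp_fun P p2 C2" "Lp_fun P p3 C3" "Lp_fun P p4 C4"
      "Lp_fun P p5 A" "Lp_fun P p5 B"
      "p0 > 0" "p1 > 0" "p2 > 0" "p3 > 0" "p4 > 0" "p5 > 0"
    and \<beta>: "\<beta> > 1"
    and Om: "\<forall>\<epsilon>\<in>I. Om \<epsilon> \<in> sets P \<and> measure P (Om \<epsilon>) = 1"
    and H1: "\<forall>n\<ge>1. \<forall>\<epsilon>\<in>I. \<forall>\<omega>\<in>Om \<epsilon>. \<forall>f\<in>Bw.
        nw (cocycle L \<sigma> n ((sinv P \<sigma> ^^ n) \<omega>) \<epsilon> f) \<le> C0 \<omega> * nw f"
    and H2: "\<forall>n\<ge>1. \<forall>\<epsilon>\<in>I. \<forall>\<omega>\<in>Om \<epsilon>. \<forall>f\<in>Bs. (\<integral>x. f x \<partial>m) = 0 \<longrightarrow>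
        nw (cocycle L \<sigma> n \<omega> \<epsilon> f) \<le> C1 \<omega> * real n powr (-\<beta>) * ns f"
    and H3: "\<forall>\<epsilon>\<in>I. \<forall>\<omega>\<in>Om \<epsilon>. \<forall>f\<in>Bs.
        nw (\<lambda>x. L \<omega> \<epsilon> f x - L \<omega> 0 f x) \<le> C2 \<omega> * \<bar>\<epsilon>\<bar> * ns f"
    and H4: "\<exists>Lhat :: 'w \<Rightarrow> ('x \<Rightarrow> real) \<Rightarrow> ('x \<Rightarrow> real).
        (AE \<omega> in P.
           (\<forall>f\<in>Bss. \<forall>g\<in>Bss. Lhat \<omega> (\<lambda>x. f x + g x) = (\<lambda>x. Lhat \<omega> f x + Lhat \<omega> g x)) \<and>
           (\<forall>c. \<forall>f\<in>Bss. Lhat \<omega> (\<lambda>x. c * f x) = (\<lambda>x. c * Lhat \<omega> f x)) \<and>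
           (\<forall>f\<in>Bss. Lhat \<omega> f \<in> Bs \<and> (\<integral>x. Lhat \<omega> f x \<partial>m) = 0) \<and>
           (\<forall>f\<in>Bss. ns (Lhat \<omega> f) \<le> C3 \<omega> * nss f)) \<and>
        (\<forall>\<epsilon>\<in>I - {0}. \<forall>\<omega>\<in>Om \<epsilon>. \<forall>f\<in>Bss.
           ns (\<lambda>x. (L \<omega> \<epsilon> f x - L \<omega> 0 f x) / \<epsilon> - Lhat \<omega> f x) \<le> C3 \<omega> * \<bar>\<epsilon>\<bar> * nss f)"
    and H5: "\<forall>\<epsilon>\<in>I. (\<lambda>(\<omega>, x). h \<epsilon> \<omega> x) \<in> borel_measurable (P \<Otimes>\<^sub>M m)"
      "\<forall>\<epsilon>\<in>I. \<forall>\<omega>\<in>Om \<epsilon>. h \<epsilon> \<omega> \<in> Bss \<and> (\<forall>x\<in>space m. h \<epsilon> \<omega> x \<ge> 0) \<and>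
         L \<omega> \<epsilon> (h \<epsilon> \<omega>) = h \<epsilon> (\<sigma> \<omega>) \<and> (\<integral>x. h \<epsilon> \<omega> x \<partial>m) = 1 \<and>
         nss (h \<epsilon> \<omega>) \<le> C4 \<omega>"
    and H6: "AE \<omega> in P. \<forall>n\<ge>1. \<forall>j\<le>n. \<forall>f\<in>Bs.
        ns (cocycle L \<sigma> j ((sinv P \<sigma> ^^ n) \<omega>) 0 f)
          \<le> A ((sinv P \<sigma> ^^ n) \<omega>) * B ((sinv P \<sigma> ^^ (n - j)) \<omega>) * ns f"
    and \<Phi>: "(\<lambda>(\<omega>, x). \<Phi> \<omega> x) \<in> borel_measurable (P \<Otimes>\<^sub>M m)"
      "\<forall>\<omega>\<in>space P. Linf_norm m (\<Phi> \<omega>) < \<infinity>"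
      "Lp_fun P p6 (\<lambda>\<omega>. real_of_ereal (Linf_norm m (\<Phi> \<omega>)))" "p6 > 0"
      "1/p6 + 1/p1 + 1/p3 + 1/p4 \<le> 1"
      "1/p6 + 1/p0 + 1/p2 + 2/p5 + 1/p3 + 1/p4 \<le> 1"
  shows "(\<lambda>\<epsilon>. \<integral>\<omega>. (\<integral>x. \<Phi> \<omega> x * h \<epsilon> \<omega> x \<partial>m) \<partial>P) differentiable (at 0)"
proof -
  from H4 obtain Lhat
    where "linear_response P \<sigma> m Bw Bs Bss nw ns nss I a b L Om C0 C1 C2 C3 C4 p1 p3 p4 p6 \<beta> h \<Phi> Lhat"
    by (blast intro: linear_response.intro[OF invertible_mp_space.intro[OF P
          invertible_mp_space_axioms.intro[OF \<sigma>(1)]] m linear_response_axioms.intro[OF spaces I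
          L_bounded L_psi Lp(2,4,5,9,11,12) \<beta> Om H1 H2 H3 _ _ H5 \<Phi>(1-5)]])
  then show ?thesis by (rule linear_response.differentiable_at_0)
qed

end
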